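(* Let $(K,\Delta\cup\{D\})$ be a differential field of characteristic zero with commuting derivations $\Delta=\{\delta_1,\dots,\delta_m\}$ and $D$, such that $(K,\Delta)\models DCF_{0,m}$. Let $\Lambda$ be a characteristic set of a prime $\Delta$-ideal of $K\{x_1,\dots,x_n\}$, let $V=\mathcal V([\Lambda]:H_\Lambda^\infty)\subseteq K^n$, and let $\bar a\in \mathcal V(\Lambda)\setminus\mathcal V(H_\Lambda)$. Then $\bar a\in V$, and for every $\bar b\in K^n$ we have $(\bar a,\bar b)\in\tau V$ if and only if $(\bar a,\bar b)\in\mathcal V(f,\tau f:\ f\in\Lambda)$.
   Context: $K\{x_1,\dots,x_n\}$ is the ring of $\Delta$-polynomials over $K$, $\Theta$ the monoid of operators $\delta_1^{e_1}\cdots\delta_m^{e_m}$, $\mathcal V(S)$ the common zero set in $K^n$ (or $K^{2n}$) of a set $S$ of $\Delta$-polynomials. A characteristic set is taken with respect to a fixed ranking; $H_\Lambda$ is the product of the separants and initials of the elements of $\Lambda$; $[\Lambda]$ is the $\Delta$-ideal generated by $\Lambda$ and $[\Lambda]:H_\Lambda^\infty=\{f: H_\Lambda^\ell f\in[\Lambda]\text{ for some }\ell\}$. For $f\in K\{\bar x\}$, $\tau f(\bar x,\bar y)=f^{D}(\bar x)+\sum_{i=1}^n\sum_{\theta\in\Theta}\frac{\partial f}{\partial(\theta x_i)}(\bar x)\,\theta y_i$, where $f^D$ is obtained by applying $D$ to the coefficients of $f$. For a $\Delta$-closed $V\subseteq K^n$ with ideal $\mathcal I(V/K)$ of $\Delta$-polynomials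 over $K$ vanishing on $V$, the prolongation is $\tau V=\mathcal V(f,\tau f:\ f\in\mathcal I(V/K))\subseteq K^{2n}$. *)

theory Defs
  imports Main "HOL-Library.Poly_Mapping"
begin

text \<open>A derivative operator theta = delta_1^e_1 ... delta_m^e_m is an exponent vector
  e :: nat =>0 nat (indices 0..m-1). A differential indeterminate theta x_i is a pair (i, e).
  Delta-polynomials over K are ordinary polynomials (finitely supported coefficient maps on
  monomials) in the indeterminates theta x_i.\<close>

type_synonym dvar = "nat \<times> (nat \<Rightarrow>\<^sub>0 nat)"
type_synonym 'a dpoly = "(dvar \<Rightarrow>\<^sub>0 nat) \<Rightarrow>\<^sub>0 'a"

definition is_derivation :: "('a::field \<Rightarrow> 'a) \<Rightarrow> bool" where
  "is_derivation d \<longleftrightarrow> (\<forall>x y. d (x + y) = d x + d y \<and> d (x * y) = d x * y + x * d y)"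

definition commuting_derivations :: "nat \<Rightarrow> (nat \<Rightarrow> 'a::field \<Rightarrow> 'a) \<Rightarrow> ('a \<Rightarrow> 'a) \<Rightarrow> bool" where
  "commuting_derivations m \<delta> D \<longleftrightarrow>
     (\<forall>j<m. is_derivation (\<delta> j)) \<and> is_derivation D \<and>
     (\<forall>j<m. \<forall>k<m. \<delta> j \<circ> \<delta> k = \<delta> k \<circ> \<delta> j) \<and> (\<forall>j<m. \<delta> j \<circ> D = D \<circ> \<delta> j)"

fun theta_app_aux :: "(nat \<Rightarrow> 'a \<Rightarrow> 'a) \<Rightarrow> (nat \<Rightarrow>\<^sub>0 nat) \<Rightarrow> nat \<Rightarrow> 'a \<Rightarrow> 'a" where
  "theta_app_aux \<delta> e 0 c = c"
| "theta_app_aux \<delta> e (Suc k) c = (\<delta> k ^^ Poly_Mapping.lookup e k) (theta_app_aux \<delta> e k c)"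

definition theta_app :: "nat \<Rightarrow> (nat \<Rightarrow> 'a \<Rightarrow> 'a) \<Rightarrow> (nat \<Rightarrow>\<^sub>0 nat) \<Rightarrow> 'a \<Rightarrow> 'a" where
  "theta_app m \<delta> e c = theta_app_aux \<delta> e m c"

definition dvars :: "'a::zero dpoly \<Rightarrow> dvar set" where
  "dvars f = (\<Union>\<mu>\<in>Poly_Mapping.keys f. Poly_Mapping.keys \<mu>)"

definition dpolys :: "nat \<Rightarrow> nat \<Rightarrow> 'a::zero dpoly set" where
  "dpolys n m = {f. \<forall>v\<in>dvars f. fst v < n \<and> Poly_Mapping.keys (snd v) \<subseteq> {..<m}}"

text \<open>Points of K^n: functions nat => K vanishing from index n on.\<close>
definition points :: "nat \<Rightarrow> (nat \<Rightarrow> 'a::zero) set" where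
  "points n = {a. \<forall>i\<ge>n. a i = 0}"

definition dvar_val :: "nat \<Rightarrow> (nat \<Rightarrow> 'a \<Rightarrow> 'a) \<Rightarrow> (nat \<Rightarrow> 'a) \<Rightarrow> dvar \<Rightarrow> 'a" where
  "dvar_val m \<delta> a v = theta_app m \<delta> (snd v) (a (fst v))"

definition deval :: "nat \<Rightarrow> (nat \<Rightarrow> 'a::field \<Rightarrow> 'a) \<Rightarrow> 'a dpoly \<Rightarrow> (nat \<Rightarrow> 'a) \<Rightarrow> 'a" where
  "deval m \<delta> f a = (\<Sum>\<mu>\<in>Poly_Mapping.keys f. Poly_Mapping.lookup f \<mu> * (\<Prod>v\<in>Poly_Mapping.keys \<mu>. dvar_val m \<delta> a v ^ Poly_Mapping.lookup \<mu> v))"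

definition dX :: "dvar \<Rightarrow> 'a::{zero,one} dpoly" where
  "dX v = Poly_Mapping.single (Poly_Mapping.single v 1) 1"

definition pdiff :: "dvar \<Rightarrow> 'a::field dpoly \<Rightarrow> 'a dpoly" where
  "pdiff v f = (\<Sum>\<mu>\<in>Poly_Mapping.keys f. Poly_Mapping.single (\<mu> - Poly_Mapping.single v 1)
                                 (Poly_Mapping.lookup f \<mu> * of_nat (Poly_Mapping.lookup \<mu> v)))"

definition coeff_map :: "('a::field \<Rightarrow> 'a) \<Rightarrow> 'a dpoly \<Rightarrow> 'a dpoly" where
  "coeff_map d f = Poly_Mapping.map d f"

definition dvar_shift :: "nat \<Rightarrow> dvar \<Rightarrow> dvar" where
  "dvar_shift j v = (fst v, snd v + Poly_Mapping.single j 1)"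

definition pder :: "(nat \<Rightarrow> 'a::field \<Rightarrow> 'a) \<Rightarrow> nat \<Rightarrow> 'a dpoly \<Rightarrow> 'a dpoly" where
  "pder \<delta> j f = coeff_map (\<delta> j) f + (\<Sum>v\<in>dvars f. pdiff v f * dX (dvar_shift j v))"

inductive_set delta_ideal :: "nat \<Rightarrow> nat \<Rightarrow> (nat \<Rightarrow> 'a::field \<Rightarrow> 'a) \<Rightarrow> 'a dpoly set \<Rightarrow> 'a dpoly set"
  for n m \<delta> S where
  gen: "f \<in> S \<Longrightarrow> f \<in> delta_ideal n m \<delta> S"
| zero: "0 \<in> delta_ideal n m \<delta> S"
| add: "f \<in> delta_ideal n m \<delta> S \<Longrightarrow> g \<in> delta_ideal n m \<delta> S \<Longrightarrow> f + g \<in> delta_ideal n m \<delta> S"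
| mult: "r \<in> dpolys n m \<Longrightarrow> f \<in> delta_ideal n m \<delta> S \<Longrightarrow> r * f \<in> delta_ideal n m \<delta> S"
| der: "j < m \<Longrightarrow> f \<in> delta_ideal n m \<delta> S \<Longrightarrow> pder \<delta> j f \<in> delta_ideal n m \<delta> S"

definition prime_delta_ideal :: "nat \<Rightarrow> nat \<Rightarrow> (nat \<Rightarrow> 'a::field \<Rightarrow> 'a) \<Rightarrow> 'a dpoly set \<Rightarrow> bool" where
  "prime_delta_ideal n m \<delta> P \<longleftrightarrow>
     P \<subseteq> dpolys n m \<and> 0 \<in> P \<and>
     (\<forall>f\<in>P. \<forall>g\<in>P. f + g \<in> P) \<and>
     (\<forall>r\<in>dpolys n m. \<forall>f\<in>P. r * f \<in> P) \<and>
     (\<forall>j<m. \<forall>f\<in>P. pder \<delta> j f \<in> P) \<and>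
     1 \<notin> P \<and>
     (\<forall>f\<in>dpolys n m. \<forall>g\<in>dpolys n m. f * g \<in> P \<longrightarrow> f \<in> P \<or> g \<in> P)"

definition valid_dvar :: "nat \<Rightarrow> nat \<Rightarrow> dvar \<Rightarrow> bool" where
  "valid_dvar n m v \<longleftrightarrow> fst v < n \<and> Poly_Mapping.keys (snd v) \<subseteq> {..<m}"

definition is_ranking :: "nat \<Rightarrow> nat \<Rightarrow> (dvar \<Rightarrow> dvar \<Rightarrow> bool) \<Rightarrow> bool" where
  "is_ranking n m rk \<longleftrightarrow>
     (\<forall>u. \<not> rk u u) \<and>
     (\<forall>u v w. rk u v \<longrightarrow> rk v w \<longrightarrow> rk u w) \<and>
     (\<forall>u v. valid_dvar n m u \<longrightarrow> valid_dvar n m v \<longrightarrow> u = v \<or> rk u v \<or> rk v u) \<and>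
     (\<forall>u j. valid_dvar n m u \<longrightarrow> j < m \<longrightarrow> rk u (dvar_shift j u)) \<and>
     (\<forall>u v j. valid_dvar n m u \<longrightarrow> valid_dvar n m v \<longrightarrow> j < m \<longrightarrow> rk u v \<longrightarrow>
              rk (dvar_shift j u) (dvar_shift j v))"

definition leader :: "(dvar \<Rightarrow> dvar \<Rightarrow> bool) \<Rightarrow> 'a::zero dpoly \<Rightarrow> dvar" where
  "leader rk f = (THE v. v \<in> dvars f \<and> (\<forall>w\<in>dvars f. w \<noteq> v \<longrightarrow> rk w v))"

definition degree_in :: "dvar \<Rightarrow> 'a::zero dpoly \<Rightarrow> nat" where
  "degree_in v f = (if f = 0 then 0 else Max ((\<lambda>\<mu>. Poly_Mapping.lookup \<mu> v) ` Poly_Mapping.keys f))"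

definition coeff_in :: "dvar \<Rightarrow> nat \<Rightarrow> 'a::field dpoly \<Rightarrow> 'a dpoly" where
  "coeff_in v k f = (\<Sum>\<mu>\<in>{\<mu>\<in>Poly_Mapping.keys f. Poly_Mapping.lookup \<mu> v = k}.
                       Poly_Mapping.single (\<mu> - Poly_Mapping.single v k) (Poly_Mapping.lookup f \<mu>))"

definition initial :: "(dvar \<Rightarrow> dvar \<Rightarrow> bool) \<Rightarrow> 'a::field dpoly \<Rightarrow> 'a dpoly" where
  "initial rk f = coeff_in (leader rk f) (degree_in (leader rk f) f) f"

definition separant :: "(dvar \<Rightarrow> dvar \<Rightarrow> bool) \<Rightarrow> 'a::field dpoly \<Rightarrow> 'a dpoly" where
  "separant rk f = pdiff (leader rk f) f"

definition is_const :: "'a::zero dpoly \<Rightarrow> bool" where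
  "is_const f \<longleftrightarrow> dvars f = {}"

definition proper_derivative :: "dvar \<Rightarrow> dvar \<Rightarrow> bool" where
  "proper_derivative w u \<longleftrightarrow> fst w = fst u \<and> (\<forall>j. Poly_Mapping.lookup (snd u) j \<le> Poly_Mapping.lookup (snd w) j) \<and> snd w \<noteq> snd u"

definition partially_reduced :: "(dvar \<Rightarrow> dvar \<Rightarrow> bool) \<Rightarrow> 'a::zero dpoly \<Rightarrow> 'a dpoly \<Rightarrow> bool" where
  "partially_reduced rk f g \<longleftrightarrow> (\<forall>w\<in>dvars f. \<not> proper_derivative w (leader rk g))"

definition reduced :: "(dvar \<Rightarrow> dvar \<Rightarrow> bool) \<Rightarrow> 'a::zero dpoly \<Rightarrow> 'a dpoly \<Rightarrow> bool" where
  "reduced rk f g \<longleftrightarrow> partially_reduced rk f g \<and>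
      degree_in (leader rk g) f < degree_in (leader rk g) g"

definition autoreduced :: "(dvar \<Rightarrow> dvar \<Rightarrow> bool) \<Rightarrow> 'a::zero dpoly set \<Rightarrow> bool" where
  "autoreduced rk A \<longleftrightarrow> finite A \<and> (\<forall>f\<in>A. \<not> is_const f) \<and>
      (\<forall>f\<in>A. \<forall>g\<in>A. f \<noteq> g \<longrightarrow> reduced rk f g)"

definition rank_less :: "(dvar \<Rightarrow> dvar \<Rightarrow> bool) \<Rightarrow> 'a::zero dpoly \<Rightarrow> 'a dpoly \<Rightarrow> bool" where
  "rank_less rk f g \<longleftrightarrow> rk (leader rk f) (leader rk g) \<or>
     (leader rk f = leader rk g \<and> degree_in (leader rk f) f < degree_in (leader rk g) g)"

definition same_rank :: "(dvar \<Rightarrow> dvar \<Rightarrow> bool) \<Rightarrow> 'a::zero dpoly \<Rightarrow> 'a dpoly \<Rightarrow> bool" where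
  "same_rank rk f g \<longleftrightarrow> leader rk f = leader rk g \<and>
     degree_in (leader rk f) f = degree_in (leader rk g) g"

definition aut_lower :: "(dvar \<Rightarrow> dvar \<Rightarrow> bool) \<Rightarrow> 'a::zero dpoly set \<Rightarrow> 'a dpoly set \<Rightarrow> bool" where
  "aut_lower rk A B \<longleftrightarrow>
     (\<exists>as bs. set as = A \<and> set bs = B \<and> sorted_wrt (rank_less rk) as \<and> sorted_wrt (rank_less rk) bs \<and>
        ((\<exists>k<min (length as) (length bs). (\<forall>i<k. same_rank rk (as ! i) (bs ! i)) \<and>
              rank_less rk (as ! k) (bs ! k)) \<or>
         (length as > length bs \<and> (\<forall>i<length bs. same_rank rk (as ! i) (bs ! i)))))"

definition characteristic_set :: "(dvar \<Rightarrow> dvar \<Rightarrow> bool) \<Rightarrow> 'a::zero dpoly set \<Rightarrow> 'a dpoly set \<Rightarrow> bool" where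
  "characteristic_set rk \<Lambda> P \<longleftrightarrow> autoreduced rk \<Lambda> \<and> \<Lambda> \<subseteq> P \<and>
     \<not> (\<exists>B. autoreduced rk B \<and> B \<subseteq> P \<and> aut_lower rk B \<Lambda>)"

definition H_of :: "(dvar \<Rightarrow> dvar \<Rightarrow> bool) \<Rightarrow> 'a::field dpoly set \<Rightarrow> 'a dpoly" where
  "H_of rk \<Lambda> = (\<Prod>f\<in>\<Lambda>. initial rk f * separant rk f)"

definition saturation :: "nat \<Rightarrow> nat \<Rightarrow> (nat \<Rightarrow> 'a::field \<Rightarrow> 'a) \<Rightarrow> 'a dpoly set \<Rightarrow> 'a dpoly \<Rightarrow> 'a dpoly set" where
  "saturation n m \<delta> \<Lambda> H = {f \<in> dpolys n m. \<exists>l. H ^ l * f \<in> delta_ideal n m \<delta> \<Lambda>}"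

definition zero_set :: "nat \<Rightarrow> nat \<Rightarrow> (nat \<Rightarrow> 'a::field \<Rightarrow> 'a) \<Rightarrow> 'a dpoly set \<Rightarrow> (nat \<Rightarrow> 'a) set" where
  "zero_set n m \<delta> S = {a \<in> points n. \<forall>f\<in>S. deval m \<delta> f a = 0}"

definition vanishing_ideal :: "nat \<Rightarrow> nat \<Rightarrow> (nat \<Rightarrow> 'a::field \<Rightarrow> 'a) \<Rightarrow> (nat \<Rightarrow> 'a) set \<Rightarrow> 'a dpoly set" where
  "vanishing_ideal n m \<delta> V = {f \<in> dpolys n m. \<forall>a\<in>V. deval m \<delta> f a = 0}"

definition tau_eval :: "nat \<Rightarrow> (nat \<Rightarrow> 'a::field \<Rightarrow> 'a) \<Rightarrow> ('a \<Rightarrow> 'a) \<Rightarrow> 'a dpoly \<Rightarrow> (nat \<Rightarrow> 'a) \<Rightarrow> (nat \<Rightarrow> 'a) \<Rightarrow> 'a" where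
  "tau_eval m \<delta> D f a b = deval m \<delta> (coeff_map D f) a +
      (\<Sum>v\<in>dvars f. deval m \<delta> (pdiff v f) a * dvar_val m \<delta> b v)"

definition tau_zero_set :: "nat \<Rightarrow> nat \<Rightarrow> (nat \<Rightarrow> 'a::field \<Rightarrow> 'a) \<Rightarrow> ('a \<Rightarrow> 'a) \<Rightarrow> 'a dpoly set \<Rightarrow> ((nat \<Rightarrow> 'a) \<times> (nat \<Rightarrow> 'a)) set" where
  "tau_zero_set n m \<delta> D S = {(a, b). a \<in> points n \<and> b \<in> points n \<and>
      (\<forall>f\<in>S. deval m \<delta> f a = 0 \<and> tau_eval m \<delta> D f a b = 0)}"

definition prolongation :: "nat \<Rightarrow> nat \<Rightarrow> (nat \<Rightarrow> 'a::field \<Rightarrow> 'a) \<Rightarrow> ('a \<Rightarrow> 'a) \<Rightarrow> (nat \<Rightarrow> 'a) set \<Rightarrow> ((nat \<Rightarrow> 'a) \<times> (nat \<Rightarrow> 'a)) set" where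
  "prolongation n m \<delta> D V = tau_zero_set n m \<delta> D (vanishing_ideal n m \<delta> V)"

text \<open>(K, Delta) is differentially closed, expressed via the differential Nullstellensatz
  form of existential closedness: every system f = 0 (f \<in> F), g \<noteq> 0 over K that is consistent
  (no power of g lies in [F]) has a solution in K.\<close>
definition DCF :: "nat \<Rightarrow> (nat \<Rightarrow> 'a::field_char_0 \<Rightarrow> 'a) \<Rightarrow> bool" where
  "DCF m \<delta> \<longleftrightarrow> (\<forall>j<m. is_derivation (\<delta> j)) \<and> (\<forall>j<m. \<forall>k<m. \<delta> j \<circ> \<delta> k = \<delta> k \<circ> \<delta> j) \<and>
     (\<forall>N F g. finite F \<longrightarrow> F \<subseteq> dpolys N m \<longrightarrow> g \<in> dpolys N m \<longrightarrow>
        (\<forall>k. g ^ k \<notin> delta_ideal N m \<delta> F) \<longrightarrow>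
        (\<exists>a\<in>points N. (\<forall>f\<in>F. deval m \<delta> f a = 0) \<and> deval m \<delta> g a \<noteq> 0))"

end

theory Submission
  imports Defs "HOL-Library.Ramsey"
begin

(* At a point a of \<Lambda> where H_\<Lambda> does not vanish, every f with H_\<Lambda>^l f \<in> [\<Lambda>] vanishes,
  so a \<in> V, and \<Lambda> \<subseteq> I(V) gives one direction of the equivalence. Conversely let g \<in> I(V).
  Differential closedness (Nullstellensatz form) puts a power of H_\<Lambda> g into [\<Lambda>] \<subseteq> P,
  hence g \<in> P, because H_\<Lambda> \<notin> P: initials and separants are nonzero and reduced with respect
  to \<Lambda>, so the minimality of the characteristic set keeps them out of P. Ritt's reduction
  (pseudo-division by the elements of \<Lambda> and by derivatives of them, which are linear in
  their leaders with the separant as coefficient) gives H_\<Lambda>^l g \<in> [\<Lambda>]. Finally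
  f \<mapsto> (f(a), \<tau>f(a,b)) behaves like a first-order jet: it is additive, satisfies the Leibniz
  rule and commutes with the \<delta>_j because D does, so it vanishes on [\<Lambda>] whenever it
  vanishes on \<Lambda>; evaluating at H_\<Lambda>^l g and dividing by H_\<Lambda>(a)^l yields \<tau>g(a,b) = 0. *)

abbreviation lookup :: "('a \<Rightarrow>\<^sub>0 'b::zero) \<Rightarrow> 'a \<Rightarrow> 'b" where
  "lookup \<equiv> Poly_Mapping.lookup"

abbreviation keys :: "('a \<Rightarrow>\<^sub>0 'b::zero) \<Rightarrow> 'a set" where
  "keys \<equiv> Poly_Mapping.keys"

abbreviation single :: "'a \<Rightarrow> 'b::zero \<Rightarrow> 'a \<Rightarrow>\<^sub>0 'b" where
  "single \<equiv> Poly_Mapping.single"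

section \<open>Differential polynomials as finitely supported maps\<close>

lemma poly_mapping_sum_single: "p = (\<Sum>\<mu>\<in>keys p. single \<mu> (lookup p \<mu>))"
proof (rule poly_mapping_eqI)
  fix k
  have "lookup (\<Sum>\<mu>\<in>keys p. single \<mu> (lookup p \<mu>)) k = (\<Sum>\<mu>\<in>keys p. (lookup p \<mu> when \<mu> = k))"
    by (simp add: lookup_sum lookup_single)
  also have "\<dots> = lookup p k"
    by (cases "k \<in> keys p") (auto simp: when_def in_keys_iff)
  finally show "lookup p k = lookup (\<Sum>\<mu>\<in>keys p. single \<mu> (lookup p \<mu>)) k" by simp
qed

lemma poly_mapping_induct[case_names zero single add]:
  fixes p :: "'a \<Rightarrow>\<^sub>0 'b::comm_monoid_add"
  assumes "P 0" "\<And>\<mu> c. P (single \<mu> c)" "\<And>p q. P p \<Longrightarrow> P q \<Longrightarrow> P (p + q)"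
  shows "P p"
proof -
  have "P (\<Sum>\<mu>\<in>S. single \<mu> (lookup p \<mu>))" if "finite S" for S
    using that by (induction S rule: finite_induct) (auto intro: assms)
  then show ?thesis by (subst poly_mapping_sum_single) simp
qed

lemma sum_keys_superset:
  assumes "finite S" "keys p \<subseteq> S" "\<And>\<mu>. F \<mu> 0 = 0"
  shows "(\<Sum>\<mu>\<in>keys p. F \<mu> (lookup p \<mu>)) = (\<Sum>\<mu>\<in>S. F \<mu> (lookup p \<mu>))"
  by (rule sum.mono_neutral_left) (use assms in \<open>auto simp: in_keys_iff\<close>)

lemma keys_add_nat: "keys (a + b :: 'a \<Rightarrow>\<^sub>0 nat) = keys a \<union> keys b"
  by (auto simp: in_keys_iff lookup_add)

lemma lookup_sum_single_at:
  assumes "finite A" "\<mu> \<in> A" "\<And>\<nu>. \<nu> \<in> A \<Longrightarrow> \<nu> \<noteq> \<mu> \<Longrightarrow> g \<nu> = g \<mu> \<Longrightarrow> c \<nu> = 0"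
  shows "lookup (\<Sum>\<nu>\<in>A. single (g \<nu>) (c \<nu>)) (g \<mu>) = c \<mu>"
proof -
  have "lookup (\<Sum>\<nu>\<in>A. single (g \<nu>) (c \<nu>)) (g \<mu>) = (\<Sum>\<nu>\<in>A. (c \<nu> when g \<nu> = g \<mu>))"
    by (simp add: lookup_sum lookup_single)
  also have "\<dots> = (c \<mu> when g \<mu> = g \<mu>) + (\<Sum>\<nu>\<in>A - {\<mu>}. (c \<nu> when g \<nu> = g \<mu>))"
    using assms(1,2) by (simp add: sum.remove)
  also have "(\<Sum>\<nu>\<in>A - {\<mu>}. (c \<nu> when g \<nu> = g \<mu>)) = 0"
    using assms(3) by (intro sum.neutral) (auto simp: when_def)
  finally show ?thesis by simp
qed

lemma minus_single_cancel:
  "k \<le> lookup \<nu> u \<Longrightarrow> k \<le> lookup \<mu> u \<Longrightarrow> \<nu> - single u k = \<mu> - single u (k::nat) \<Longrightarrow> \<nu> = \<mu>"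
proof (intro poly_mapping_eqI)
  fix x assume a: "k \<le> lookup \<nu> u" "k \<le> lookup \<mu> u" "\<nu> - single u k = \<mu> - single u k"
  have "lookup (\<nu> - single u k) x = lookup (\<mu> - single u k) x" using a(3) by simp
  then show "lookup \<nu> x = lookup \<mu> x"
    using a(1,2) by (cases "x = u") (auto simp: lookup_minus lookup_single)
qed

lemma minus_single_add:
  "lookup \<mu> v \<noteq> 0 \<Longrightarrow> \<mu> - single v 1 + \<nu> = \<mu> + \<nu> - single v (1::nat)"
  by (rule poly_mapping_eqI) (auto simp: lookup_minus lookup_add lookup_single when_def)

definition eval_monomial :: "nat \<Rightarrow> (nat \<Rightarrow> 'a::field \<Rightarrow> 'a) \<Rightarrow> (nat \<Rightarrow> 'a) \<Rightarrow> (dvar \<Rightarrow>\<^sub>0 nat) \<Rightarrow> 'a" where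
  "eval_monomial m \<delta> a \<mu> = (\<Prod>v\<in>keys \<mu>. dvar_val m \<delta> a v ^ lookup \<mu> v)"

lemma eval_monomial_superset:
  assumes "finite S" "keys \<mu> \<subseteq> S"
  shows "eval_monomial m \<delta> a \<mu> = (\<Prod>v\<in>S. dvar_val m \<delta> a v ^ lookup \<mu> v)"
  unfolding eval_monomial_def
  by (rule prod.mono_neutral_left) (use assms in \<open>auto simp: in_keys_iff\<close>)

lemma eval_monomial_add:
  "eval_monomial m \<delta> a (\<mu> + \<nu>) = eval_monomial m \<delta> a \<mu> * eval_monomial m \<delta> a \<nu>"
proof -
  let ?S = "keys \<mu> \<union> keys \<nu>"
  have "eval_monomial m \<delta> a (\<mu> + \<nu>) = (\<Prod>v\<in>?S. dvar_val m \<delta> a v ^ lookup (\<mu>+\<nu>) v)"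
    by (rule eval_monomial_superset) (auto simp: keys_add_nat)
  also have "\<dots> = (\<Prod>v\<in>?S. dvar_val m \<delta> a v ^ lookup \<mu> v * dvar_val m \<delta> a v ^ lookup \<nu> v)"
    by (simp add: lookup_add power_add)
  also have "\<dots> = eval_monomial m \<delta> a \<mu> * eval_monomial m \<delta> a \<nu>"
    by (simp add: prod.distrib eval_monomial_superset[of ?S])
  finally show ?thesis .
qed

lemma eval_monomial_zero[simp]: "eval_monomial m \<delta> a 0 = 1"
  by (simp add: eval_monomial_def)

lemma deval_superset:
  assumes "finite S" "keys f \<subseteq> S"
  shows "deval m \<delta> f a = (\<Sum>\<mu>\<in>S. lookup f \<mu> * eval_monomial m \<delta> a \<mu>)"
  unfolding deval_def eval_monomial_def[symmetric]
  by (rule sum_keys_superset[where F="\<lambda>\<mu> c. c * eval_monomial m \<delta> a \<mu>"]) (use assms in auto)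

lemma deval_add: "deval m \<delta> (f + g) a = deval m \<delta> f a + deval m \<delta> g a"
proof -
  let ?S = "keys f \<union> keys g \<union> keys (f+g)"
  have "deval m \<delta> f a = (\<Sum>\<mu>\<in>?S. lookup f \<mu> * eval_monomial m \<delta> a \<mu>)"
    "deval m \<delta> g a = (\<Sum>\<mu>\<in>?S. lookup g \<mu> * eval_monomial m \<delta> a \<mu>)"
    "deval m \<delta> (f+g) a = (\<Sum>\<mu>\<in>?S. lookup (f+g) \<mu> * eval_monomial m \<delta> a \<mu>)"
    by (rule deval_superset; auto)+
  then show ?thesis
    by (simp add: lookup_add distrib_right sum.distrib)
qed

lemma deval_zero[simp]: "deval m \<delta> 0 a = 0"
  by (simp add: deval_def)

lemma deval_single: "deval m \<delta> (single \<mu> c) a = c * eval_monomial m \<delta> a \<mu>"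
  by (subst deval_superset[of "{\<mu>}"]) auto

lemma deval_mult: "deval m \<delta> (f * g) a = deval m \<delta> f a * deval m \<delta> g a"
proof (induction f rule: poly_mapping_induct)
  case (single \<mu> c)
  show ?case
    by (induction g rule: poly_mapping_induct)
      (simp_all add: distrib_left deval_add mult_single deval_single eval_monomial_add)
qed (simp_all add: distrib_right deval_add)

lemma deval_one[simp]: "deval m \<delta> 1 a = 1"
  by (metis deval_single eval_monomial_zero mult_1 single_one)

lemma deval_power: "deval m \<delta> (f ^ k) a = deval m \<delta> f a ^ k"
  by (induction k) (simp_all add: deval_mult)

lemma deval_const: "deval m \<delta> (single 0 c) a = c"
  by (simp add: deval_single)

lemma deval_dX: "deval m \<delta> (dX v) a = dvar_val m \<delta> a v"
  by (simp add: dX_def deval_single eval_monomial_def)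

lemma dvars_single: "dvars (single \<mu> c) = (if c = 0 then {} else keys \<mu>)"
  by (simp add: dvars_def)

lemma dvars_zero[simp]: "dvars 0 = {}"
  by (simp add: dvars_def)

lemma dvars_add: "dvars (f + g) \<subseteq> dvars f \<union> dvars g"
  unfolding dvars_def using keys_add by fastforce

lemma dvars_uminus[simp]: "dvars (- f) = dvars (f::'a::ab_group_add dpoly)"
  by (simp add: dvars_def keys_minus)

lemma dvars_diff: "dvars (f - g :: 'a::ab_group_add dpoly) \<subseteq> dvars f \<union> dvars g"
  using dvars_add[of f "-g"] by simp

lemma dvars_mult: "dvars (f * g) \<subseteq> dvars f \<union> dvars g"
proof
  fix v assume "v \<in> dvars (f * g)"
  then obtain \<mu> where "\<mu> \<in> keys (f*g)" "v \<in> keys \<mu>" by (auto simp: dvars_def)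
  then obtain a b where "a \<in> keys f" "b \<in> keys g" "\<mu> = a + b" using keys_mult by blast
  then show "v \<in> dvars f \<union> dvars g" using \<open>v \<in> keys \<mu>\<close> by (auto simp: dvars_def keys_add_nat)
qed

lemma dvars_sum: "dvars (\<Sum>i\<in>S. F i) \<subseteq> (\<Union>i\<in>S. dvars (F i))"
  by (induction S rule: infinite_finite_induct) (use dvars_add in auto)

lemma dvars_one[simp]: "dvars 1 = {}"
  by (metis dvars_single keys_zero single_one)

lemma dvars_prod: "dvars (\<Prod>i\<in>S. F i) \<subseteq> (\<Union>i\<in>S. dvars (F i))"
  by (induction S rule: infinite_finite_induct) (use dvars_mult in auto)

lemma dvars_power: "dvars (f ^ k) \<subseteq> dvars f"
  by (induction k) (use dvars_mult in auto)

lemma dvars_dX[simp]: "dvars (dX v :: 'a::{zero_neq_one} dpoly) = {v}"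
  by (simp add: dX_def dvars_single)

lemma dvars_const[simp]: "dvars (single 0 c) = {}"
  by (simp add: dvars_single)

lemma finite_dvars[simp]: "finite (dvars f)"
  by (simp add: dvars_def)

lemma dvars_empty_const: "dvars f = {} \<Longrightarrow> f = single 0 (lookup f 0)"
proof -
  assume "dvars f = {}"
  then have "keys f \<subseteq> {0}" by (auto simp: dvars_def)
  then show ?thesis
    by (intro poly_mapping_eqI) (auto simp: lookup_single when_def in_keys_iff)
qed

lemma dpolys_iff: "f \<in> dpolys n m \<longleftrightarrow> (\<forall>v\<in>dvars f. valid_dvar n m v)"
  by (simp add: dpolys_def valid_dvar_def)

lemma dpolys_subset: "dvars f \<subseteq> dvars g \<Longrightarrow> g \<in> dpolys n m \<Longrightarrow> f \<in> dpolys n m"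
  by (auto simp: dpolys_iff)

lemma dpolys_add: "f \<in> dpolys n m \<Longrightarrow> g \<in> dpolys n m \<Longrightarrow> f + g \<in> dpolys n m"
  using dvars_add by (fastforce simp: dpolys_iff)

lemma dpolys_mult: "f \<in> dpolys n m \<Longrightarrow> g \<in> dpolys n m \<Longrightarrow> f * g \<in> dpolys n m"
  using dvars_mult by (fastforce simp: dpolys_iff)

lemma dpolys_power: "f \<in> dpolys n m \<Longrightarrow> f ^ k \<in> dpolys n m"
  using dvars_power by (fastforce simp: dpolys_iff)

lemma dpolys_const: "single 0 c \<in> dpolys n m"
  by (simp add: dpolys_iff)

lemma dpolys_zero: "0 \<in> dpolys n m"
  by (simp add: dpolys_iff)

lemma dpolys_prod: "(\<And>i. i \<in> S \<Longrightarrow> F i \<in> dpolys n m) \<Longrightarrow> (\<Prod>i\<in>S. F i) \<in> dpolys n m"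
  using dvars_prod[of F S] by (fastforce simp: dpolys_iff)

lemma dX_power: "(dX v :: 'a::comm_semiring_1 dpoly) ^ k = single (single v k) 1"
  by (induction k) (simp_all add: dX_def mult_single single_add[symmetric] add.commute)

lemma prod_dX_power: "(\<Prod>v\<in>S. (dX v :: 'a::comm_semiring_1 dpoly) ^ F v) = single (\<Sum>v\<in>S. single v (F v)) 1"
  by (induction S rule: infinite_finite_induct) (simp_all add: dX_power mult_single)

lemma single_decomp: "(single \<mu> c :: 'a::comm_semiring_1 dpoly) = single 0 c * (\<Prod>v\<in>keys \<mu>. dX v ^ lookup \<mu> v)"
  by (simp add: prod_dX_power mult_single poly_mapping_sum_single[of \<mu>, symmetric])

lemma dpoly_induct[case_names const var add mult]:
  fixes f :: "'a::comm_semiring_1 dpoly"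
  assumes c: "\<And>c. P (single 0 c)" and v: "\<And>v. P (dX v)"
    and a: "\<And>p q. P p \<Longrightarrow> P q \<Longrightarrow> P (p + q)" and m: "\<And>p q. P p \<Longrightarrow> P q \<Longrightarrow> P (p * q)"
  shows "P f"
proof (induction f rule: poly_mapping_induct)
  case zero then show ?case using c[of 0] by simp
next
  case (add p q) then show ?case using a by blast
next
  case (single \<mu> c)
  have pw: "P (x ^ k)" if "P x" for x :: "'a dpoly" and k
    using that by (induction k) (use c[of 1] m in auto)
  have "P (\<Prod>v\<in>S. dX v ^ lookup \<mu> v)" for S
    by (induction S rule: infinite_finite_induct) (use c[of 1] m pw v in auto)
  then show ?case by (subst single_decomp) (use m c in blast)
qed

section \<open>Derivations and partial derivatives\<close>

lemma derivation_add: "is_derivation d \<Longrightarrow> d (x + y) = d x + d y"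
  by (simp add: is_derivation_def)

lemma derivation_mult: "is_derivation d \<Longrightarrow> d (x * y) = d x * y + x * d y"
  by (simp add: is_derivation_def)

lemma derivation_zero: "is_derivation d \<Longrightarrow> d 0 = 0"
  using derivation_mult[of d 0 0] by simp

lemma derivation_one: "is_derivation d \<Longrightarrow> d 1 = 0"
  using derivation_mult[of d 1 1] by (metis add_cancel_right_right mult_1_left mult_1_right)

lemma lookup_coeff_map: "d 0 = 0 \<Longrightarrow> lookup (coeff_map d f) k = d (lookup f k)"
  by (simp add: coeff_map_def Poly_Mapping.map.rep_eq when_def)

lemma coeff_map_add: "is_derivation d \<Longrightarrow> coeff_map d (f + g) = coeff_map d f + coeff_map d g"
  by (rule poly_mapping_eqI) (simp add: lookup_coeff_map derivation_zero lookup_add derivation_add)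

lemma coeff_map_zero[simp]: "d 0 = 0 \<Longrightarrow> coeff_map d 0 = 0"
  by (rule poly_mapping_eqI) (simp add: lookup_coeff_map)

lemma coeff_map_single: "d 0 = 0 \<Longrightarrow> coeff_map d (single \<mu> c) = single \<mu> (d c)"
  by (simp add: coeff_map_def)

lemma keys_coeff_map: "keys (coeff_map d f) \<subseteq> keys f"
  by (auto simp: coeff_map_def Poly_Mapping.map.rep_eq in_keys_iff when_def split: if_splits)

lemma dvars_coeff_map: "dvars (coeff_map d f) \<subseteq> dvars f"
  unfolding dvars_def using keys_coeff_map by blast

lemma coeff_map_mult:
  assumes "is_derivation d"
  shows "coeff_map d (f * g) = coeff_map d f * g + f * coeff_map d g"
proof (induction f rule: poly_mapping_induct)
  case (single \<mu> c)
  show ?case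
    by (induction g rule: poly_mapping_induct)
      (use assms in \<open>simp_all add: coeff_map_add distrib_left mult_single coeff_map_single
        derivation_zero derivation_mult single_add\<close>)
qed (use assms in \<open>simp_all add: derivation_zero coeff_map_add distrib_right\<close>)

lemma pdiff_superset:
  assumes "finite S" "keys f \<subseteq> S"
  shows "pdiff v f = (\<Sum>\<mu>\<in>S. single (\<mu> - single v 1) (lookup f \<mu> * of_nat (lookup \<mu> v)))"
  unfolding pdiff_def by (rule sum_keys_superset[where F="\<lambda>\<mu> c. single (\<mu> - single v 1) (c * of_nat (lookup \<mu> v))"]) (use assms in auto)

lemma pdiff_add: "pdiff v (f + g) = pdiff v f + pdiff v g"
proof -
  let ?S = "keys f \<union> keys g \<union> keys (f+g)"
  have "pdiff v f = (\<Sum>\<mu>\<in>?S. single (\<mu> - single v 1) (lookup f \<mu> * of_nat (lookup \<mu> v)))"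
    "pdiff v g = (\<Sum>\<mu>\<in>?S. single (\<mu> - single v 1) (lookup g \<mu> * of_nat (lookup \<mu> v)))"
    "pdiff v (f+g) = (\<Sum>\<mu>\<in>?S. single (\<mu> - single v 1) (lookup (f+g) \<mu> * of_nat (lookup \<mu> v)))"
    by (rule pdiff_superset; auto)+
  then show ?thesis
    by (simp add: lookup_add distrib_right sum.distrib single_add)
qed

lemma pdiff_zero[simp]: "pdiff v 0 = 0" by (simp add: pdiff_def)

lemma pdiff_single: "pdiff v (single \<mu> c) = single (\<mu> - single v 1) (c * of_nat (lookup \<mu> v))"
  by (subst pdiff_superset[of "{\<mu>}"]) auto

lemma pdiff_notin: "v \<notin> dvars f \<Longrightarrow> pdiff v f = 0"
  unfolding pdiff_def dvars_def by (intro sum.neutral) (auto simp: in_keys_iff)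

lemma dvars_pdiff: "dvars (pdiff v f) \<subseteq> dvars f"
proof -
  have "dvars (pdiff v f) \<subseteq> (\<Union>\<mu>\<in>keys f. dvars (single (\<mu> - single v 1) (lookup f \<mu> * of_nat (lookup \<mu> v))))"
    unfolding pdiff_def by (rule dvars_sum)
  also have "\<dots> \<subseteq> dvars f"
    by (auto simp: dvars_single dvars_def in_keys_iff lookup_minus split: if_splits)
  finally show ?thesis .
qed

lemma pdiff_mult: "pdiff v (f * g) = pdiff v f * g + f * (pdiff v g :: 'a::field dpoly)"
proof (induction f rule: poly_mapping_induct)
  case zero then show ?case by simp
next
  case (add p q) then show ?case by (simp add: pdiff_add distrib_right)
next
  case (single \<mu> c)
  show ?case
  proof (induction g rule: poly_mapping_induct)
    case zero then show ?case by simp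
  next
    case (add p q) then show ?case by (simp add: pdiff_add distrib_left)
  next
    case (single \<nu> e)
    have 1: "single (\<mu> - single v 1 + \<nu>) (c * of_nat (lookup \<mu> v) * e) = single (\<mu> + \<nu> - single v 1) (c * e * of_nat (lookup \<mu> v))"
    proof (cases "lookup \<mu> v = 0")
      case False
      then have "\<mu> - single v 1 + \<nu> = \<mu> + \<nu> - single v 1" by (rule minus_single_add)
      then show ?thesis by (simp add: mult_ac)
    qed simp
    have 2: "single (\<mu> + (\<nu> - single v 1)) (c * (e * of_nat (lookup \<nu> v))) = single (\<mu> + \<nu> - single v 1) (c * e * of_nat (lookup \<nu> v))"
    proof (cases "lookup \<nu> v = 0")
      case False
      then have "\<nu> - single v 1 + \<mu> = \<nu> + \<mu> - single v 1" by (rule minus_single_add)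
      then show ?thesis by (simp add: mult_ac add.commute)
    qed simp
    have 3: "pdiff v (single \<mu> c * single \<nu> e) = single (\<mu>+\<nu> - single v 1) (c*e*of_nat(lookup (\<mu>+\<nu>) v))"
      by (simp only: mult_single pdiff_single)
    have 4: "pdiff v (single \<mu> c) * single \<nu> e + single \<mu> c * pdiff v (single \<nu> e) =
       single (\<mu> - single v 1 + \<nu>) (c * of_nat (lookup \<mu> v) * e) + single (\<mu> + (\<nu> - single v 1)) (c * (e * of_nat (lookup \<nu> v)))"
      by (simp only: pdiff_single mult_single)
    show ?case
      unfolding 3 4 1 2 by (simp add: single_add[symmetric] lookup_add distrib_left)
  qed
qed

lemma pdiff_const[simp]: "pdiff v (single 0 c) = 0"
  by (simp add: pdiff_single)

lemma pder_superset:
  assumes "finite S" "dvars f \<subseteq> S"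
  shows "pder \<delta> j f = coeff_map (\<delta> j) f + (\<Sum>v\<in>S. pdiff v f * dX (dvar_shift j v))"
proof -
  have "(\<Sum>v\<in>dvars f. pdiff v f * dX (dvar_shift j v)) = (\<Sum>v\<in>S. pdiff v f * dX (dvar_shift j v))"
    by (rule sum.mono_neutral_left) (use assms in \<open>auto simp: pdiff_notin\<close>)
  then show ?thesis by (simp add: pder_def)
qed

lemma pder_add:
  assumes "is_derivation (\<delta> j)"
  shows "pder \<delta> j (f + g) = pder \<delta> j f + pder \<delta> j g"
proof -
  let ?S = "dvars f \<union> dvars g"
  have "pder \<delta> j (f+g) = coeff_map (\<delta> j) (f+g) + (\<Sum>v\<in>?S. pdiff v (f+g) * dX (dvar_shift j v))"
    "pder \<delta> j f = coeff_map (\<delta> j) f + (\<Sum>v\<in>?S. pdiff v f * dX (dvar_shift j v))"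
    "pder \<delta> j g = coeff_map (\<delta> j) g + (\<Sum>v\<in>?S. pdiff v g * dX (dvar_shift j v))"
    by (rule pder_superset; use dvars_add in auto)+
  then show ?thesis using assms
    by (simp add: coeff_map_add pdiff_add distrib_right sum.distrib)
qed

lemma pder_mult:
  assumes "is_derivation (\<delta> j)"
  shows "pder \<delta> j (f * g) = pder \<delta> j f * g + f * pder \<delta> j g"
proof -
  let ?S = "dvars f \<union> dvars g"
  have "pder \<delta> j (f*g) = coeff_map (\<delta> j) (f*g) + (\<Sum>v\<in>?S. pdiff v (f*g) * dX (dvar_shift j v))"
    "pder \<delta> j f = coeff_map (\<delta> j) f + (\<Sum>v\<in>?S. pdiff v f * dX (dvar_shift j v))"
    "pder \<delta> j g = coeff_map (\<delta> j) g + (\<Sum>v\<in>?S. pdiff v g * dX (dvar_shift j v))"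
    by (rule pder_superset; use dvars_mult in auto)+
  then show ?thesis using assms
    by (simp add: coeff_map_mult pdiff_mult distrib_right distrib_left sum.distrib sum_distrib_left
        sum_distrib_right algebra_simps)
qed

lemma pder_const:
  assumes "is_derivation (\<delta> j)"
  shows "pder \<delta> j (single 0 c) = single 0 (\<delta> j c)"
  using assms by (simp add: pder_def coeff_map_single derivation_zero)

lemma pder_dX:
  assumes "is_derivation (\<delta> j)"
  shows "pder \<delta> j (dX v) = dX (dvar_shift j v)"
  using assms by (simp add: pder_def dX_def coeff_map_single derivation_zero derivation_one dvars_single pdiff_single)

lemma pder_zero[simp]: "is_derivation (\<delta> j) \<Longrightarrow> pder \<delta> j 0 = 0"
  by (simp add: pder_def derivation_zero)

lemma dvars_pder: "dvars (pder \<delta> j f) \<subseteq> dvars f \<union> dvar_shift j ` dvars f"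
proof -
  have "dvars (pder \<delta> j f) \<subseteq> dvars (coeff_map (\<delta> j) f) \<union> dvars (\<Sum>v\<in>dvars f. pdiff v f * dX (dvar_shift j v))"
    unfolding pder_def by (rule dvars_add)
  also have "\<dots> \<subseteq> dvars f \<union> dvar_shift j ` dvars f"
  proof -
    have "dvars (\<Sum>v\<in>dvars f. pdiff v f * dX (dvar_shift j v)) \<subseteq> (\<Union>v\<in>dvars f. dvars (pdiff v f * dX (dvar_shift j v)))"
      by (rule dvars_sum)
    also have "\<dots> \<subseteq> dvars f \<union> dvar_shift j ` dvars f"
      using dvars_mult dvars_pdiff by fastforce
    finally show ?thesis using dvars_coeff_map by blast
  qed
  finally show ?thesis .
qed

lemma pder_decomp:
  assumes "w \<in> dvars g"
  obtains T where "pder \<delta> j g = pdiff w g * dX (dvar_shift j w) + T"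
    "dvars T \<subseteq> dvars g \<union> dvar_shift j ` (dvars g - {w})"
proof
  let ?T = "coeff_map (\<delta> j) g + (\<Sum>v\<in>dvars g - {w}. pdiff v g * dX (dvar_shift j v))"
  show "pder \<delta> j g = pdiff w g * dX (dvar_shift j w) + ?T"
    unfolding pder_def using assms by (simp add: sum.remove algebra_simps)
  have "dvars (pdiff v g * dX (dvar_shift j v)) \<subseteq> dvars g \<union> {dvar_shift j v}" for v
    using dvars_mult[of "pdiff v g" "dX (dvar_shift j v)"] dvars_pdiff[of v g] by auto
  then have "dvars (\<Sum>v\<in>dvars g - {w}. pdiff v g * dX (dvar_shift j v)) \<subseteq> dvars g \<union> dvar_shift j ` (dvars g - {w})"
    using dvars_sum[of "\<lambda>v. pdiff v g * dX (dvar_shift j v)" "dvars g - {w}"] by blast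
  then show "dvars ?T \<subseteq> dvars g \<union> dvar_shift j ` (dvars g - {w})"
    using dvars_add[of "coeff_map (\<delta> j) g"] dvars_coeff_map[of "\<delta> j" g] by blast
qed

lemma valid_shift: "valid_dvar n m v \<Longrightarrow> j < m \<Longrightarrow> valid_dvar n m (dvar_shift j v)"
  by (auto simp: valid_dvar_def dvar_shift_def keys_add_nat)

lemma dpolys_pder: "f \<in> dpolys n m \<Longrightarrow> j < m \<Longrightarrow> pder \<delta> j f \<in> dpolys n m"
  using dvars_pder[of \<delta> j f] by (fastforce simp: dpolys_iff valid_shift)

lemma theta_app_aux_cong: "(\<And>i. i < k \<Longrightarrow> lookup e i = lookup e' i) \<Longrightarrow> theta_app_aux \<delta> e k c = theta_app_aux \<delta> e' k c"
  by (induction k) auto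

lemma funpow_commute: "f \<circ> g = g \<circ> f \<Longrightarrow> (f ^^ n) (g x) = g ((f ^^ n) x)"
  by (induction n) (auto simp: fun_eq_iff)

lemma theta_app_aux_shift:
  assumes "j < k" "\<And>i i'. i < k \<Longrightarrow> i' < k \<Longrightarrow> \<delta> i \<circ> \<delta> i' = \<delta> i' \<circ> \<delta> i"
  shows "theta_app_aux \<delta> (e + single j 1) k c = \<delta> j (theta_app_aux \<delta> e k c)"
  using assms
proof (induction k)
  case 0 then show ?case by simp
next
  case (Suc k)
  show ?case
  proof (cases "j = k")
    case True
    have "theta_app_aux \<delta> (e + single j 1) k c = theta_app_aux \<delta> e k c"
      by (rule theta_app_aux_cong) (auto simp: lookup_add lookup_single True)
    then show ?thesis using True by (simp add: lookup_add)
  next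
    case False
    then have "j < k" using Suc by simp
    then have "theta_app_aux \<delta> (e + single j 1) k c = \<delta> j (theta_app_aux \<delta> e k c)"
      using Suc by simp
    moreover have "\<delta> k \<circ> \<delta> j = \<delta> j \<circ> \<delta> k" using Suc.prems(2)[of k j] \<open>j < k\<close> by (auto simp: comp_def)
    ultimately show ?thesis using False
      by (simp add: lookup_add lookup_single funpow_commute)
  qed
qed

lemma dvar_val_shift:
  assumes "j < m" "\<forall>j<m. \<forall>k<m. \<delta> j \<circ> \<delta> k = \<delta> k \<circ> \<delta> j"
  shows "dvar_val m \<delta> a (dvar_shift j v) = \<delta> j (dvar_val m \<delta> a v)"
proof -
  have "\<And>i i'. i<m \<Longrightarrow> i'<m \<Longrightarrow> \<delta> i \<circ> \<delta> i' = \<delta> i' \<circ> \<delta> i" using assms(2) by blast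
  from theta_app_aux_shift[OF assms(1) this] show ?thesis
    by (simp add: dvar_val_def dvar_shift_def theta_app_def)
qed

lemma deval_pder:
  assumes "j < m" "\<forall>j<m. is_derivation (\<delta> j)" "\<forall>j<m. \<forall>k<m. \<delta> j \<circ> \<delta> k = \<delta> k \<circ> \<delta> j"
  shows "deval m \<delta> (pder \<delta> j f) a = \<delta> j (deval m \<delta> f a)"
proof -
  have d: "is_derivation (\<delta> j)" using assms by simp
  show ?thesis
  proof (induction f rule: dpoly_induct)
    case (const c) then show ?case using d by (simp add: pder_const deval_const)
  next
    case (var v) then show ?case using d assms by (simp add: pder_dX deval_dX dvar_val_shift)
  next
    case (add p q) then show ?case using d by (simp add: pder_add deval_add derivation_add)
  next
    case (mult p q) then show ?case using d by (simp add: pder_mult deval_add deval_mult derivation_mult)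
  qed
qed

section \<open>The linear part \<open>\<tau>\<close>\<close>

lemma tau_eval_superset:
  assumes "finite S" "dvars f \<subseteq> S"
  shows "tau_eval m \<delta> D f a b = deval m \<delta> (coeff_map D f) a + (\<Sum>v\<in>S. deval m \<delta> (pdiff v f) a * dvar_val m \<delta> b v)"
proof -
  have "(\<Sum>v\<in>dvars f. deval m \<delta> (pdiff v f) a * dvar_val m \<delta> b v) = (\<Sum>v\<in>S. deval m \<delta> (pdiff v f) a * dvar_val m \<delta> b v)"
    by (rule sum.mono_neutral_left) (use assms in \<open>auto simp: pdiff_notin\<close>)
  then show ?thesis by (simp add: tau_eval_def)
qed

lemma tau_eval_add:
  assumes "is_derivation D"
  shows "tau_eval m \<delta> D (f + g) a b = tau_eval m \<delta> D f a b + tau_eval m \<delta> D g a b"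
proof -
  let ?S = "dvars f \<union> dvars g"
  have "tau_eval m \<delta> D (f+g) a b =
      deval m \<delta> (coeff_map D (f+g)) a + (\<Sum>v\<in>?S. deval m \<delta> (pdiff v (f+g)) a * dvar_val m \<delta> b v)"
    "tau_eval m \<delta> D f a b = deval m \<delta> (coeff_map D f) a + (\<Sum>v\<in>?S. deval m \<delta> (pdiff v f) a * dvar_val m \<delta> b v)"
    "tau_eval m \<delta> D g a b = deval m \<delta> (coeff_map D g) a + (\<Sum>v\<in>?S. deval m \<delta> (pdiff v g) a * dvar_val m \<delta> b v)"
    by (rule tau_eval_superset; use dvars_add in auto)+
  then show ?thesis using assms
    by (simp add: coeff_map_add pdiff_add deval_add distrib_right sum.distrib)
qed

lemma tau_eval_mult:
  assumes "is_derivation D"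
  shows "tau_eval m \<delta> D (f * g) a b = deval m \<delta> f a * tau_eval m \<delta> D g a b + deval m \<delta> g a * tau_eval m \<delta> D f a b"
proof -
  let ?S = "dvars f \<union> dvars g"
  have "tau_eval m \<delta> D (f*g) a b =
      deval m \<delta> (coeff_map D (f*g)) a + (\<Sum>v\<in>?S. deval m \<delta> (pdiff v (f*g)) a * dvar_val m \<delta> b v)"
    "tau_eval m \<delta> D f a b = deval m \<delta> (coeff_map D f) a + (\<Sum>v\<in>?S. deval m \<delta> (pdiff v f) a * dvar_val m \<delta> b v)"
    "tau_eval m \<delta> D g a b = deval m \<delta> (coeff_map D g) a + (\<Sum>v\<in>?S. deval m \<delta> (pdiff v g) a * dvar_val m \<delta> b v)"
    by (rule tau_eval_superset; use dvars_mult in auto)+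
  then show ?thesis using assms
    by (simp add: coeff_map_mult pdiff_mult deval_add deval_mult distrib_right distrib_left sum.distrib
        sum_distrib_left algebra_simps)
qed

lemma tau_eval_const: "is_derivation D \<Longrightarrow> tau_eval m \<delta> D (single 0 c) a b = D c"
  by (simp add: tau_eval_def coeff_map_single derivation_zero deval_const)

lemma tau_eval_dX: "is_derivation D \<Longrightarrow> tau_eval m \<delta> D (dX v) a b = dvar_val m \<delta> b v"
  by (simp add: tau_eval_def dX_def coeff_map_single derivation_zero derivation_one pdiff_single dvars_single deval_const)

lemma tau_eval_zero[simp]: "tau_eval m \<delta> D (0::'a::field dpoly) a b = 0"
proof -
  have "coeff_map D (0::'a dpoly) = 0" unfolding coeff_map_def by (subst map_eq_zero_iff) simp
  then show ?thesis by (simp add: tau_eval_def)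
qed

lemma tau_eval_pder:
  assumes "j < m" "commuting_derivations m \<delta> D"
  shows "tau_eval m \<delta> D (pder \<delta> j f) a b = \<delta> j (tau_eval m \<delta> D f a b)"
proof -
  have dj: "is_derivation (\<delta> j)" and dD: "is_derivation D" and cD: "\<delta> j \<circ> D = D \<circ> \<delta> j"
    and A: "\<forall>j<m. is_derivation (\<delta> j)" and C: "\<forall>j<m. \<forall>k<m. \<delta> j \<circ> \<delta> k = \<delta> k \<circ> \<delta> j"
    using assms by (auto simp: commuting_derivations_def)
  show ?thesis
  proof (induction f rule: dpoly_induct)
    case (const c)
    then show ?case using dj dD cD by (simp add: pder_const tau_eval_const fun_eq_iff)
  next
    case (var v) then show ?case using dj dD assms(1) C by (simp add: pder_dX tau_eval_dX dvar_val_shift)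
  next
    case (add p q) then show ?case using dj dD by (simp add: pder_add tau_eval_add derivation_add)
  next
    case (mult p q)
    then show ?case using dj dD deval_pder[OF assms(1) A C]
      by (simp add: pder_mult tau_eval_add tau_eval_mult derivation_add derivation_mult algebra_simps)
  qed
qed

section \<open>\<open>\<Delta>\<close>-ideals\<close>

lemma delta_ideal_minimal:
  assumes "prime_delta_ideal n m \<delta> P" "S \<subseteq> P" "h \<in> delta_ideal n m \<delta> S" shows "h \<in> P"
  using assms(3) by (induction rule: delta_ideal.induct) (use assms(1,2) in \<open>auto simp: prime_delta_ideal_def\<close>)

lemma delta_ideal_tau_vanish:
  assumes "commuting_derivations m \<delta> D" "\<forall>f\<in>S. deval m \<delta> f a = 0 \<and> tau_eval m \<delta> D f a b = 0"
    and "h \<in> delta_ideal n m \<delta> S"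
  shows "deval m \<delta> h a = 0 \<and> tau_eval m \<delta> D h a b = 0"
  using assms(3)
proof (induction h rule: delta_ideal.induct)
  case (gen f) then show ?case using assms by auto
next
  case zero then show ?case by simp
next
  case (add f g) then show ?case using assms(1) by (simp add: deval_add tau_eval_add commuting_derivations_def)
next
  case (mult r f) then show ?case using assms(1) by (simp add: deval_mult tau_eval_mult commuting_derivations_def)
next
  case (der j f)
  have A: "\<forall>j<m. is_derivation (\<delta> j)" "\<forall>j<m. \<forall>k<m. \<delta> j \<circ> \<delta> k = \<delta> k \<circ> \<delta> j"
    using assms(1) by (auto simp: commuting_derivations_def)
  show ?case using der deval_pder[OF der(1) A] tau_eval_pder[OF der(1) assms(1)] A(1) derivation_zero by metis
qed

lemma delta_ideal_vanish:
  assumes "\<forall>j<m. is_derivation (\<delta> j)" "\<forall>j<m. \<forall>k<m. \<delta> j \<circ> \<delta> k = \<delta> k \<circ> \<delta> j"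
    and "\<forall>f\<in>S. deval m \<delta> f a = 0" and "h \<in> delta_ideal n m \<delta> S"
  shows "deval m \<delta> h a = 0"
  using assms(4)
proof (induction h rule: delta_ideal.induct)
  case (gen f) then show ?case using assms by auto
next
  case zero then show ?case by simp
next
  case (add f g) then show ?case by (simp add: deval_add)
next
  case (mult r f) then show ?case by (simp add: deval_mult)
next
  case (der j f)
  then show ?case using deval_pder[OF der(1) assms(1,2)] assms(1) derivation_zero by metis
qed

lemma prime_delta_ideal_uminus:
  assumes "prime_delta_ideal n m \<delta> P" "f \<in> P"
  shows "- f \<in> P"
proof -
  have "single 0 (-1) * f \<in> P" using assms(2) dpolys_const[of "-1" n m] assms(1) unfolding prime_delta_ideal_def by blast
  moreover have "single 0 (-1) * f = - f"
    by (metis mult_minus1 single_one single_uminus)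
  ultimately show ?thesis by simp
qed

lemma prime_delta_ideal_diff:
  assumes "prime_delta_ideal n m \<delta> P" "f \<in> P" "g \<in> P"
  shows "f - g \<in> P"
  using prime_delta_ideal_uminus[OF assms(1,3)] assms by (auto simp: prime_delta_ideal_def)

lemma prime_delta_ideal_mult: "prime_delta_ideal n m \<delta> P \<Longrightarrow> r \<in> dpolys n m \<Longrightarrow> f \<in> P \<Longrightarrow> r * f \<in> P"
  by (auto simp: prime_delta_ideal_def)

lemma prime_delta_ideal_power:
  assumes "prime_delta_ideal n m \<delta> P" "f \<in> dpolys n m" "f ^ k \<in> P"
  shows "f \<in> P"
  using assms(3)
proof (induction k)
  case 0 then show ?case using assms(1) by (simp add: prime_delta_ideal_def)
next
  case (Suc k)
  then show ?case using assms(1,2) dpolys_power[OF assms(2), of k]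
    unfolding prime_delta_ideal_def by (metis power_Suc)
qed

lemma prime_delta_ideal_prod_notin:
  assumes "prime_delta_ideal n m \<delta> P" "finite S" "\<And>i. i \<in> S \<Longrightarrow> F i \<in> dpolys n m"
    "\<And>i. i \<in> S \<Longrightarrow> F i \<notin> P"
  shows "(\<Prod>i\<in>S. F i) \<notin> P"
  using assms(2-4)
proof (induction S rule: finite_induct)
  case empty then show ?case using assms(1) by (simp add: prime_delta_ideal_def)
next
  case (insert x S)
  have "(\<Prod>i\<in>S. F i) \<in> dpolys n m" using insert by (intro dpolys_prod) auto
  moreover have "F x \<in> dpolys n m" "F x \<notin> P" using insert by auto
  ultimately show ?case using insert assms(1) unfolding prime_delta_ideal_def by (simp, blast)
qed

lemma prime_delta_ideal_const_zero:
  assumes "prime_delta_ideal n m \<delta> P" "single 0 c \<in> P"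
  shows "c = 0"
proof (rule ccontr)
  assume "c \<noteq> 0"
  have "single 0 (inverse c) * single 0 c \<in> P" using assms(2) dpolys_const[of "inverse c" n m] assms(1) unfolding prime_delta_ideal_def by blast
  then have "1 \<in> P" using \<open>c \<noteq> 0\<close> by (simp add: mult_single)
  then show False using assms(1) by (simp add: prime_delta_ideal_def)
qed

lemma prime_delta_ideal_prop:
  assumes "prime_delta_ideal n m \<delta> P"
  shows "\<forall>f\<in>dpolys n m. \<forall>g\<in>dpolys n m. f * g \<in> P \<longrightarrow> f \<in> P \<or> g \<in> P"
  using assms unfolding prime_delta_ideal_def by (elim conjE) assumption

lemma prime_delta_ideal_mult_notin:
  assumes "prime_delta_ideal n m \<delta> P" "f \<in> dpolys n m" "g \<in> dpolys n m" "f \<notin> P" "g \<notin> P"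
  shows "f * g \<notin> P"
  using prime_delta_ideal_prop[OF assms(1)] assms(2-5) by blast

section \<open>Degrees and pseudo-division\<close>

definition degree_bounded :: "dvar \<Rightarrow> nat \<Rightarrow> 'a::zero dpoly \<Rightarrow> bool" where
  "degree_bounded v N p \<longleftrightarrow> (\<forall>\<mu>\<in>keys p. lookup \<mu> v \<le> N)"

lemma degree_bounded_add: "degree_bounded v N p \<Longrightarrow> degree_bounded v N q \<Longrightarrow> degree_bounded v N (p + q)"
  unfolding degree_bounded_def
proof
  fix \<mu> assume A: "\<forall>\<mu>\<in>keys p. lookup \<mu> v \<le> N" "\<forall>\<mu>\<in>keys q. lookup \<mu> v \<le> N" and "\<mu> \<in> keys (p + q)"
  have "\<mu> \<in> keys p \<union> keys q" using subsetD[OF keys_add \<open>\<mu> \<in> keys (p + q)\<close>] .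
  then show "lookup \<mu> v \<le> N" using A by (elim UnE) auto
qed

lemma degree_bounded_uminus: "degree_bounded v N (- p) = degree_bounded v N (p :: 'a::ab_group_add dpoly)"
  by (simp add: degree_bounded_def keys_minus)

lemma degree_bounded_diff: "degree_bounded v N p \<Longrightarrow> degree_bounded v N q \<Longrightarrow> degree_bounded v N (p - q :: 'a::ab_group_add dpoly)"
  using degree_bounded_add[of v N p "-q"] by (simp add: degree_bounded_uminus)

lemma degree_bounded_mult: "degree_bounded v N1 p \<Longrightarrow> degree_bounded v N2 q \<Longrightarrow> degree_bounded v (N1 + N2) (p * q)"
  unfolding degree_bounded_def
proof
  fix \<mu> assume A: "\<forall>\<mu>\<in>keys p. lookup \<mu> v \<le> N1" "\<forall>\<mu>\<in>keys q. lookup \<mu> v \<le> N2" and "\<mu> \<in> keys (p * q)"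
  then obtain a b where "a \<in> keys p" "b \<in> keys q" "\<mu> = a + b" using keys_mult by blast
  then show "lookup \<mu> v \<le> N1 + N2" using A by (simp add: lookup_add add_mono)
qed

lemma degree_bounded_notin: "v \<notin> dvars p \<Longrightarrow> degree_bounded v 0 p"
  by (auto simp: degree_bounded_def dvars_def in_keys_iff)

lemma degree_bounded_0_notin: "degree_bounded v 0 p \<Longrightarrow> v \<notin> dvars p"
  by (auto simp: degree_bounded_def dvars_def in_keys_iff)

lemma degree_bounded_dX_power: "degree_bounded w k ((dX w :: 'a::comm_semiring_1 dpoly) ^ k)"
  by (simp add: dX_power degree_bounded_def lookup_single when_def)

lemma degree_bounded_mult_0: "degree_bounded v 0 p \<Longrightarrow> degree_bounded v N q \<Longrightarrow> degree_bounded v N (p * q)"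
  using degree_bounded_mult[of v 0 p N q] by simp

lemma degree_bounded_mult_0': "degree_bounded v N p \<Longrightarrow> degree_bounded v 0 q \<Longrightarrow> degree_bounded v N (p * q)"
  using degree_bounded_mult[of v N p 0 q] by simp

lemma degree_in_le: "degree_in v p \<le> N \<longleftrightarrow> degree_bounded v N p"
  by (auto simp: degree_in_def degree_bounded_def)

lemma degree_bounded_degree_in: "degree_bounded v (degree_in v p) p"
  using degree_in_le by blast

lemma degree_in_pos: "v \<in> dvars p \<Longrightarrow> 1 \<le> degree_in v p"
proof (rule ccontr)
  assume "v \<in> dvars p" "\<not> 1 \<le> degree_in v p"
  then have "degree_bounded v 0 p" using degree_in_le[of v p 0] by simp
  then show False using degree_bounded_0_notin \<open>v \<in> dvars p\<close> by blast
qed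

lemma degree_in_notin: "v \<notin> dvars p \<Longrightarrow> degree_in v p = 0"
  using degree_in_le[of v p 0] degree_bounded_notin by simp
lemma lookup_sum_single: "finite A \<Longrightarrow> lookup (\<Sum>\<mu>\<in>A. single \<mu> (g \<mu>)) k = (if k \<in> A then g k else 0)"
  by (simp add: lookup_sum lookup_single when_def)

lemma keys_coeff_in:
  "keys (coeff_in w k p) \<subseteq> (\<lambda>\<mu>. \<mu> - single w k) ` {\<mu>\<in>keys p. lookup \<mu> w = k}"
proof -
  have "keys (coeff_in w k p) \<subseteq> (\<Union>\<mu>\<in>{\<mu>\<in>keys p. lookup \<mu> w = k}. keys (single (\<mu> - single w k) (lookup p \<mu>)))"
    unfolding coeff_in_def by (rule keys_sum)
  also have "\<dots> \<subseteq> (\<lambda>\<mu>. \<mu> - single w k) ` {\<mu>\<in>keys p. lookup \<mu> w = k}" by auto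
  finally show ?thesis .
qed

lemma dvars_coeff_in: "dvars (coeff_in w k p) \<subseteq> dvars p - {w}"
proof
  fix v assume "v \<in> dvars (coeff_in w k p)"
  then obtain \<nu> where "\<nu> \<in> keys (coeff_in w k p)" "v \<in> keys \<nu>" by (auto simp: dvars_def)
  then obtain \<mu> where "\<mu> \<in> keys p" "lookup \<mu> w = k" "\<nu> = \<mu> - single w k" using keys_coeff_in by blast
  then have "lookup \<mu> v \<noteq> 0" "v \<noteq> w" using \<open>v \<in> keys \<nu>\<close>
    by (auto simp: in_keys_iff lookup_minus lookup_single)
  then show "v \<in> dvars p - {w}" using \<open>\<mu> \<in> keys p\<close> by (auto simp: dvars_def in_keys_iff)
qed

lemma degree_bounded_coeff_in: "degree_bounded v N p \<Longrightarrow> degree_bounded v N (coeff_in w k p)"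
  unfolding degree_bounded_def using keys_coeff_in by (fastforce simp: lookup_minus)
lemma coeff_in_decomp:
  fixes p :: "'a::field dpoly"
  assumes "degree_bounded w N p"
  shows "\<exists>p0. p = coeff_in w N p * dX w ^ N + p0 \<and> degree_bounded w (N - 1) p0 \<and> keys p0 \<subseteq> keys p"
proof -
  let ?A = "{\<mu>\<in>keys p. lookup \<mu> w = N}"
  define p0 where "p0 = (\<Sum>\<mu>\<in>keys p - ?A. single \<mu> (lookup p \<mu>))"
  have "coeff_in w N p * dX w ^ N = (\<Sum>\<mu>\<in>?A. single (\<mu> - single w N) (lookup p \<mu>) * single (single w N) 1)"
    by (simp add: coeff_in_def dX_power sum_distrib_right)
  also have "\<dots> = (\<Sum>\<mu>\<in>?A. single \<mu> (lookup p \<mu>))"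
  proof (rule sum.cong)
    fix \<mu> assume "\<mu> \<in> ?A"
    then have "\<mu> - single w N + single w N = \<mu>"
      by (intro poly_mapping_eqI) (auto simp: lookup_minus lookup_add lookup_single when_def)
    then show "single (\<mu> - single w N) (lookup p \<mu>) * single (single w N) 1 = single \<mu> (lookup p \<mu>)" by (simp add: mult_single)
  qed simp
  finally have c: "coeff_in w N p * dX w ^ N = (\<Sum>\<mu>\<in>?A. single \<mu> (lookup p \<mu>))" .
  have "p = (\<Sum>\<mu>\<in>keys p. single \<mu> (lookup p \<mu>))" by (rule poly_mapping_sum_single)
  also have "\<dots> = (\<Sum>\<mu>\<in>keys p \<inter> ?A. single \<mu> (lookup p \<mu>)) + (\<Sum>\<mu>\<in>keys p - ?A. single \<mu> (lookup p \<mu>))"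
    by (rule sum.Int_Diff) simp
  also have "keys p \<inter> ?A = ?A" by auto
  finally have "p = coeff_in w N p * dX w ^ N + p0" using c by (simp add: p0_def)
  moreover have kp0: "keys p0 \<subseteq> keys p - ?A"
    by (auto simp: p0_def in_keys_iff lookup_sum_single split: if_splits)
  moreover have "degree_bounded w (N - 1) p0"
    using kp0 assms unfolding degree_bounded_def by fastforce
  ultimately show ?thesis by blast
qed
lemma keys_pdiff: "keys (pdiff w p) \<subseteq> (\<lambda>\<mu>. \<mu> - single w 1) ` {\<mu>\<in>keys p. lookup \<mu> w \<noteq> 0}"
proof -
  have "keys (pdiff w p) \<subseteq> (\<Union>\<mu>\<in>keys p. keys (single (\<mu> - single w 1) (lookup p \<mu> * of_nat (lookup \<mu> w))))"
    unfolding pdiff_def by (rule keys_sum)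
  also have "\<dots> \<subseteq> (\<lambda>\<mu>. \<mu> - single w 1) ` {\<mu>\<in>keys p. lookup \<mu> w \<noteq> 0}"
  proof
    fix x assume "x \<in> (\<Union>\<mu>\<in>keys p. keys (single (\<mu> - single w 1) (lookup p \<mu> * of_nat (lookup \<mu> w))))"
    then obtain \<mu> where "\<mu> \<in> keys p" "x \<in> keys (single (\<mu> - single w 1) (lookup p \<mu> * of_nat (lookup \<mu> w)))" by blast
    then have "x = \<mu> - single w 1" "of_nat (lookup \<mu> w) \<noteq> (0::'a)" by (auto split: if_splits)
    then have "x = \<mu> - single w 1" "lookup \<mu> w \<noteq> 0" by (metis of_nat_0)+
    then show "x \<in> (\<lambda>\<mu>. \<mu> - single w 1) ` {\<mu>\<in>keys p. lookup \<mu> w \<noteq> 0}" using \<open>\<mu> \<in> keys p\<close> by blast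
  qed
  finally show ?thesis .
qed

lemma degree_bounded_pdiff: "degree_bounded v N p \<Longrightarrow> degree_bounded v N (pdiff w p)"
  unfolding degree_bounded_def using keys_pdiff by (fastforce simp: lookup_minus)

lemma degree_bounded_pdiff_self: "degree_bounded w N p \<Longrightarrow> degree_bounded w (N - 1) (pdiff w p)"
  unfolding degree_bounded_def using keys_pdiff by (fastforce simp: lookup_minus lookup_single)

lemma dvars_closed_add: "dvars p \<subseteq> A \<Longrightarrow> dvars q \<subseteq> A \<Longrightarrow> dvars (p + q) \<subseteq> A"
  using dvars_add by blast

lemma dvars_closed_diff: "dvars p \<subseteq> A \<Longrightarrow> dvars q \<subseteq> A \<Longrightarrow> dvars (p - q :: 'a::ab_group_add dpoly) \<subseteq> A"
  using dvars_diff by blast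

lemma dvars_closed_mult: "dvars p \<subseteq> A \<Longrightarrow> dvars q \<subseteq> A \<Longrightarrow> dvars (p * q) \<subseteq> A"
  using dvars_mult by blast

lemma dvars_closed_power: "dvars p \<subseteq> A \<Longrightarrow> dvars (p ^ k) \<subseteq> A"
  using dvars_power by blast

lemma dvars_closed_dX: "w \<in> A \<Longrightarrow> dvars (dX w :: 'a::zero_neq_one dpoly) \<subseteq> A"
  by simp

lemmas dvars_closed = dvars_closed_add dvars_closed_diff dvars_closed_mult dvars_closed_power dvars_closed_dX

lemma pseudo_division_step:
  fixes I f0 c g0 :: "'a::field dpoly"
  assumes "w \<notin> dvars I" "degree_bounded w (d - 1) f0" "w \<notin> dvars c" "degree_bounded w (N - 1) g0"
    and "1 \<le> d" "d \<le> N"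
  defines "g' \<equiv> I * g0 - c * dX w ^ (N - d) * f0"
  shows "I * (c * dX w ^ N + g0) = c * dX w ^ (N - d) * (I * dX w ^ d + f0) + g'"
    and "degree_bounded w (N - 1) g'"
    and "dvars g' \<subseteq> dvars c \<union> dvars g0 \<union> dvars I \<union> dvars f0 \<union> {w}"
    and "\<And>v M. v \<notin> dvars I \<union> dvars f0 \<union> {w} \<Longrightarrow> degree_bounded v M c \<Longrightarrow> degree_bounded v M g0 \<Longrightarrow>
           degree_bounded v M g'"
proof -
  have "(dX w :: 'a dpoly) ^ N = dX w ^ (N - d) * dX w ^ d"
    using assms(6) by (simp add: power_add[symmetric])
  then show "I * (c * dX w ^ N + g0) = c * dX w ^ (N - d) * (I * dX w ^ d + f0) + g'"
    unfolding g'_def by (simp add: algebra_simps)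
  have "degree_bounded w (0 + (N - d)) (c * dX w ^ (N - d))"
    by (rule degree_bounded_mult[OF degree_bounded_notin[OF assms(3)] degree_bounded_dX_power])
  then have "degree_bounded w (0 + (N - d) + (d - 1)) (c * dX w ^ (N - d) * f0)"
    using assms(2) by (rule degree_bounded_mult)
  moreover have "0 + (N - d) + (d - 1) = N - 1"
    using assms(5,6) by arith
  moreover have "degree_bounded w (N - 1) (I * g0)"
    by (rule degree_bounded_mult_0[OF degree_bounded_notin[OF assms(1)] assms(4)])
  ultimately show "degree_bounded w (N - 1) g'"
    unfolding g'_def by (intro degree_bounded_diff) auto
  show "dvars g' \<subseteq> dvars c \<union> dvars g0 \<union> dvars I \<union> dvars f0 \<union> {w}"
    unfolding g'_def by (intro dvars_closed) auto
  fix v M assume v: "v \<notin> dvars I \<union> dvars f0 \<union> {w}" and "degree_bounded v M c" "degree_bounded v M g0"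
  moreover have "v \<notin> dvars (dX w ^ (N - d) :: 'a dpoly)"
    using dvars_power[of "dX w :: 'a dpoly" "N - d"] v by auto
  ultimately show "degree_bounded v M g'"
    unfolding g'_def
    by (intro degree_bounded_diff degree_bounded_mult_0 degree_bounded_mult_0' degree_bounded_notin) auto
qed

lemma pseudo_division:
  fixes f g I f0 :: "'a::field dpoly"
  assumes f: "f = I * dX w ^ d + f0" and wI: "w \<notin> dvars I" and f0: "degree_bounded w (d - 1) f0"
    and d: "1 \<le> d"
  shows "\<exists>k q r. I ^ k * g = q * f + r \<and> degree_bounded w (d - 1) r \<and>
           dvars q \<union> dvars r \<subseteq> dvars g \<union> dvars I \<union> dvars f0 \<union> {w} \<and>
           (\<forall>v. v \<notin> dvars I \<union> dvars f0 \<union> {w} \<longrightarrow> degree_in v r \<le> degree_in v g)"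
proof (induction "degree_in w g" arbitrary: g rule: less_induct)
  case less
  let ?N = "degree_in w g"
  let ?W = "dvars g \<union> dvars I \<union> dvars f0 \<union> {w}"
  show ?case
  proof (cases "?N \<le> d - 1")
    case True
    then show ?thesis
      by (intro exI[of _ 0] exI[of _ 0] exI[of _ g]) (auto simp: degree_in_le)
  next
    case False
    define c where "c = coeff_in w ?N g"
    obtain g0 where g0: "g = c * dX w ^ ?N + g0" "degree_bounded w (?N - 1) g0" "keys g0 \<subseteq> keys g"
      unfolding c_def using coeff_in_decomp[OF degree_bounded_degree_in] by blast
    define g' where "g' = I * g0 - c * dX w ^ (?N - d) * f0"
    have dc: "dvars c \<subseteq> dvars g - {w}"
      unfolding c_def by (rule dvars_coeff_in)
    have dg0: "dvars g0 \<subseteq> dvars g"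
      using g0(3) by (auto simp: dvars_def)
    have cN: "w \<notin> dvars c" "d \<le> ?N"
      using dc False by auto
    note step = pseudo_division_step[OF wI f0 cN(1) g0(2) d cN(2), folded g'_def]
    have "I * g = I * (c * dX w ^ ?N + g0)"
      by (metis g0(1))
    also have "\<dots> = c * dX w ^ (?N - d) * f + g'"
      unfolding f by (rule step(1))
    finally have eq: "I * g = c * dX w ^ (?N - d) * f + g'" .
    have "degree_in w g' < ?N"
      using step(2) False by (auto simp: degree_in_le[symmetric])
    then obtain k q r where kqr: "I ^ k * g' = q * f + r" "degree_bounded w (d - 1) r"
      "dvars q \<union> dvars r \<subseteq> dvars g' \<union> dvars I \<union> dvars f0 \<union> {w}"
      "\<forall>v. v \<notin> dvars I \<union> dvars f0 \<union> {w} \<longrightarrow> degree_in v r \<le> degree_in v g'"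
      using less by blast
    have "I ^ Suc k * g = I ^ k * (I * g)"
      by simp
    also have "\<dots> = I ^ k * c * dX w ^ (?N - d) * f + I ^ k * g'"
      unfolding eq by (simp add: algebra_simps)
    also have "\<dots> = (I ^ k * c * dX w ^ (?N - d) + q) * f + r"
      unfolding kqr(1) by (simp add: algebra_simps)
    finally have "I ^ Suc k * g = (I ^ k * c * dX w ^ (?N - d) + q) * f + r" .
    moreover have "dvars (I ^ k * c * dX w ^ (?N - d) + q) \<union> dvars r \<subseteq> ?W"
    proof -
      have "dvars (I ^ k * c * dX w ^ (?N - d)) \<subseteq> ?W"
        using dc by (intro dvars_closed) auto
      moreover have "dvars g' \<subseteq> ?W"
        using step(3) dc dg0 by blast
      ultimately show ?thesis
        using kqr(3) dvars_add[of "I ^ k * c * dX w ^ (?N - d)" q] by blast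
    qed
    moreover have "degree_in v r \<le> degree_in v g" if v: "v \<notin> dvars I \<union> dvars f0 \<union> {w}" for v
    proof -
      have "degree_bounded v (degree_in v g) c"
        unfolding c_def by (rule degree_bounded_coeff_in[OF degree_bounded_degree_in])
      moreover have "degree_bounded v (degree_in v g) g0"
        using degree_bounded_degree_in[of v g] g0(3) by (auto simp: degree_bounded_def)
      ultimately have "degree_bounded v (degree_in v g) g'"
        by (rule step(4)[OF v])
      then show ?thesis
        using kqr(4) v by (metis degree_in_le le_trans)
    qed
    ultimately show ?thesis
      using kqr(2) by blast
  qed
qed

lemma degree_in_attained:
  assumes "f \<noteq> 0"
  shows "\<exists>\<mu>\<in>keys f. lookup \<mu> v = degree_in v f"
proof -
  have "keys f \<noteq> {}" using assms by simp
  then have "Max ((\<lambda>\<mu>. lookup \<mu> v) ` keys f) \<in> (\<lambda>\<mu>. lookup \<mu> v) ` keys f" by (intro Max_in) auto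
  then show ?thesis using assms unfolding degree_in_def by (simp add: image_iff) (metis)
qed

lemma coeff_in_nonzero:
  assumes "f \<noteq> 0"
  shows "coeff_in v (degree_in v f) (f :: 'a::field dpoly) \<noteq> 0"
proof -
  let ?d = "degree_in v f"
  obtain \<mu> where \<mu>: "\<mu> \<in> keys f" "lookup \<mu> v = ?d" using degree_in_attained[OF assms] by blast
  let ?A = "{\<mu>\<in>keys f. lookup \<mu> v = ?d}"
  have "lookup (coeff_in v ?d f) (\<mu> - single v ?d) = lookup f \<mu>"
    unfolding coeff_in_def
  proof (rule lookup_sum_single_at[where g="\<lambda>\<mu>. \<mu> - single v ?d" and c="lookup f"])
    fix \<nu> assume "\<nu> \<in> ?A" "\<nu> \<noteq> \<mu>" "\<nu> - single v ?d = \<mu> - single v ?d"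
    then show "lookup f \<nu> = 0" using minus_single_cancel[of ?d \<nu> v \<mu>] \<mu>(2) by auto
  qed (use \<mu> in auto)
  then show ?thesis using \<mu>(1) by (auto simp: in_keys_iff)
qed

lemma pdiff_nonzero:
  assumes "v \<in> dvars f"
  shows "pdiff v (f :: 'a::field_char_0 dpoly) \<noteq> 0"
proof -
  have f0: "f \<noteq> 0" using assms by auto
  let ?d = "degree_in v f"
  have d1: "1 \<le> ?d" using degree_in_pos[OF assms] .
  obtain \<mu> where \<mu>: "\<mu> \<in> keys f" "lookup \<mu> v = ?d" using degree_in_attained[OF f0] by blast
  have "lookup (pdiff v f) (\<mu> - single v 1) = lookup f \<mu> * of_nat (lookup \<mu> v)"
    unfolding pdiff_def
  proof (rule lookup_sum_single_at[where g="\<lambda>\<mu>. \<mu> - single v 1" and c="\<lambda>\<mu>. lookup f \<mu> * of_nat (lookup \<mu> v)"])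
    fix \<nu> assume "\<nu> \<in> keys f" "\<nu> \<noteq> \<mu>" "\<nu> - single v 1 = \<mu> - single v 1"
    then show "lookup f \<nu> * of_nat (lookup \<nu> v) = 0" using minus_single_cancel[of 1 \<nu> v \<mu>] \<mu>(2) d1
      by (cases "lookup \<nu> v = 0") auto
  qed (use \<mu> in auto)
  moreover have "lookup f \<mu> * of_nat (lookup \<mu> v) \<noteq> 0" using \<mu> d1 by (auto simp: in_keys_iff)
  ultimately show ?thesis by auto
qed

lemma dvars_separant: "dvars (separant rk f) \<subseteq> dvars f"
  by (simp add: separant_def dvars_pdiff)

lemma dvars_initial: "dvars (initial rk f) \<subseteq> dvars f - {leader rk f}"
  by (simp add: initial_def dvars_coeff_in)

lemma degree_initial_le: "degree_in v (initial rk f) \<le> degree_in v f"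
  unfolding degree_in_le initial_def by (rule degree_bounded_coeff_in) (rule degree_bounded_degree_in)

lemma degree_separant_le: "degree_in v (separant rk f) \<le> degree_in v f"
  unfolding degree_in_le separant_def by (rule degree_bounded_pdiff) (rule degree_bounded_degree_in)

lemma degree_separant_leader:
  "degree_in (leader rk f) (separant rk f) \<le> degree_in (leader rk f) f - 1"
  unfolding degree_in_le separant_def by (rule degree_bounded_pdiff_self) (rule degree_bounded_degree_in)

section \<open>Rankings and leaders\<close>

lemma finite_has_least_wrt:
  assumes "finite A" "A \<noteq> {}" "A \<subseteq> U"
    and trans: "\<forall>x\<in>U. \<forall>y\<in>U. \<forall>z\<in>U. R x y \<longrightarrow> R y z \<longrightarrow> R x z"
    and total: "\<forall>x\<in>U. \<forall>y\<in>U. x \<noteq> y \<longrightarrow> R x y \<or> R y x"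
  shows "\<exists>x\<in>A. \<forall>y\<in>A. y \<noteq> x \<longrightarrow> R x y"
  using assms(1-3)
proof (induction A rule: finite_ne_induct)
  case (insert x F)
  obtain w where w: "w \<in> F" "\<forall>y\<in>F. y \<noteq> w \<longrightarrow> R w y"
    using insert by auto
  have U: "x \<in> U" "F \<subseteq> U"
    using insert.prems by auto
  show ?case
  proof (cases "R x w")
    case True
    then have "\<forall>y\<in>insert x F. y \<noteq> x \<longrightarrow> R x y"
      using w U trans by (metis insert_iff subsetD)
    then show ?thesis by blast
  next
    case False
    then have "R w x"
      using total U w(1) insert.hyps by (metis subsetD)
    then show ?thesis
      using w by blast
  qed
qed simp

lemma sorted_wrt_list_exists:
  assumes "finite U"
    and trans: "\<forall>x\<in>U. \<forall>y\<in>U. \<forall>z\<in>U. R x y \<longrightarrow> R y z \<longrightarrow> R x z"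
    and total: "\<forall>x\<in>U. \<forall>y\<in>U. x \<noteq> y \<longrightarrow> R x y \<or> R y x"
  shows "\<exists>xs. set xs = U \<and> sorted_wrt R xs"
  using assms(1)
proof (induction U rule: finite_remove_induct)
  case (remove A)
  obtain x where x: "x \<in> A" "\<forall>y\<in>A. y \<noteq> x \<longrightarrow> R x y"
    using finite_has_least_wrt[of A U R] remove.hyps trans total by blast
  obtain xs where "set xs = A - {x}" "sorted_wrt R xs"
    using remove.IH[OF x(1)] by blast
  then have "set (x # xs) = A \<and> sorted_wrt R (x # xs)"
    using x by auto
  then show ?case by blast
qed simp

lemma derivative_exponent_induct[consumes 2, case_names single step]:
  fixes e :: "nat \<Rightarrow>\<^sub>0 nat"
  assumes "keys e \<subseteq> {..<m}" "e \<noteq> 0"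
    and single: "\<And>j. j < m \<Longrightarrow> P (single j 1)"
    and step: "\<And>e j. keys e \<subseteq> {..<m} \<Longrightarrow> e \<noteq> 0 \<Longrightarrow> j < m \<Longrightarrow> P e \<Longrightarrow> P (e + single j 1)"
  shows "P e"
  using assms(1,2)
proof (induction "sum (lookup e) (keys e)" arbitrary: e rule: less_induct)
  case less
  obtain j where j: "j \<in> keys e"
    using less.prems(2) by (metis all_not_in_conv keys_eq_empty)
  then have jm: "j < m"
    using less.prems(1) by auto
  define e' where "e' = e - single j 1"
  have ee: "e = e' + single j 1"
    using j by (intro poly_mapping_eqI) (auto simp: e'_def lookup_minus lookup_add lookup_single when_def in_keys_iff)
  have ke': "keys e' \<subseteq> keys e"
    by (auto simp: e'_def in_keys_iff lookup_minus)
  show ?case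
  proof (cases "e' = 0")
    case True
    then show ?thesis
      using single[OF jm] ee by simp
  next
    case False
    have "sum (lookup e) (keys e) = sum (\<lambda>k. lookup e' k + (1 when j = k)) (keys e)"
      by (subst ee) (simp add: lookup_add lookup_single)
    also have "\<dots> = sum (lookup e') (keys e) + 1"
      using j by (simp add: sum.distrib when_def)
    also have "sum (lookup e') (keys e) = sum (lookup e') (keys e')"
      using ke' by (intro sum.mono_neutral_right) (auto simp: in_keys_iff)
    finally have "P e'"
      using less ke' False by auto
    then show ?thesis
      using step[OF _ False jm] ke' less.prems(1) ee by auto
  qed
qed

lemma proper_derivative_decomp:
  assumes "proper_derivative w u"
  obtains e where "e \<noteq> 0" "keys e \<subseteq> keys (snd w)" "w = (fst u, snd u + e)"
proof
  define e where "e = snd w - snd u"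
  have "\<forall>j. lookup (snd u) j \<le> lookup (snd w) j"
    using assms by (simp add: proper_derivative_def)
  then have sw: "snd w = snd u + e"
    by (intro poly_mapping_eqI) (simp add: e_def lookup_minus lookup_add)
  then show "e \<noteq> 0" "w = (fst u, snd u + e)"
    using assms by (auto simp: proper_derivative_def prod_eq_iff)
  show "keys e \<subseteq> keys (snd w)"
    by (auto simp: e_def in_keys_iff lookup_minus)
qed

lemma valid_dvar_derivative:
  "valid_dvar n m u \<Longrightarrow> keys e \<subseteq> {..<m} \<Longrightarrow> valid_dvar n m (fst u, snd u + e)"
  by (auto simp: valid_dvar_def keys_add_nat)

lemma dvar_shift_derivative: "dvar_shift j (fst u, snd u + e) = (fst u, snd u + (e + single j 1))"
  by (simp add: dvar_shift_def add.assoc)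

locale ranking =
  fixes n m :: nat and rk :: "dvar \<Rightarrow> dvar \<Rightarrow> bool"
  assumes is_ranking: "is_ranking n m rk"
begin

lemma rk_irrefl: "\<not> rk u u"
  using is_ranking unfolding is_ranking_def by blast

lemma rk_trans: "rk u v \<Longrightarrow> rk v w \<Longrightarrow> rk u w"
  using is_ranking unfolding is_ranking_def by blast

lemma rk_asym: "rk u v \<Longrightarrow> \<not> rk v u"
  using rk_trans rk_irrefl by blast

lemma rk_total: "valid_dvar n m u \<Longrightarrow> valid_dvar n m v \<Longrightarrow> u = v \<or> rk u v \<or> rk v u"
  using is_ranking unfolding is_ranking_def by blast

lemma rk_shift: "valid_dvar n m u \<Longrightarrow> j < m \<Longrightarrow> rk u (dvar_shift j u)"
  using is_ranking unfolding is_ranking_def by blast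

lemma rk_shift_mono:
  "valid_dvar n m u \<Longrightarrow> valid_dvar n m v \<Longrightarrow> j < m \<Longrightarrow> rk u v \<Longrightarrow> rk (dvar_shift j u) (dvar_shift j v)"
  using is_ranking unfolding is_ranking_def by blast

lemma rk_derivative:
  assumes "valid_dvar n m u" "keys e \<subseteq> {..<m}" "e \<noteq> 0"
  shows "rk u (fst u, snd u + e)"
  using assms(2,3)
proof (induction e rule: derivative_exponent_induct)
  case (single j)
  then show ?case
    using rk_shift[OF assms(1)] by (simp add: dvar_shift_def)
next
  case (step e j)
  then show ?case
    using rk_shift[OF valid_dvar_derivative[OF assms(1) step(1)] step(3)] rk_trans
    by (simp add: dvar_shift_derivative)
qed

lemma rk_proper_derivative:
  assumes "valid_dvar n m u" "valid_dvar n m w" "proper_derivative w u"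
  shows "rk u w"
proof -
  obtain e where "e \<noteq> 0" "keys e \<subseteq> keys (snd w)" "w = (fst u, snd u + e)"
    using proper_derivative_decomp[OF assms(3)] .
  moreover have "keys (snd w) \<subseteq> {..<m}"
    using assms(2) by (auto simp: valid_dvar_def)
  ultimately show ?thesis
    using rk_derivative[OF assms(1)] by auto
qed

lemma rk_imp_exponent_less:
  assumes "valid_dvar n m v" "valid_dvar n m w" "rk v w" "fst v = fst w"
  shows "\<exists>k<m. lookup (snd v) k < lookup (snd w) k"
proof (rule ccontr)
  assume contra: "\<not> ?thesis"
  have le: "lookup (snd w) k \<le> lookup (snd v) k" for k
  proof (cases "k < m")
    case False
    then have "lookup (snd w) k = 0"
      using assms(2) by (auto simp: valid_dvar_def in_keys_iff)
    then show ?thesis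
      by simp
  qed (use contra in auto)
  show False
  proof (cases "snd v = snd w")
    case True
    then have "v = w"
      using assms(4) by (simp add: prod_eq_iff)
    then show False
      using assms(3) rk_irrefl by simp
  next
    case False
    then have "proper_derivative v w"
      using le assms(4) by (auto simp: proper_derivative_def)
    then show False
      using rk_proper_derivative assms rk_asym by blast
  qed
qed

definition ranking_rel :: "(dvar \<times> dvar) set" where
  "ranking_rel = {(v, w). valid_dvar n m v \<and> valid_dvar n m w \<and> rk v w}"

text \<open>Rankings are well-founded: ranking_rel is transitive and covered by the finitely many
  well-founded relations "the k-th exponent increases" (k < m) and "the index changes away from i"
  (i < n), so Ramsey's theorem applies.\<close>

lemma wf_ranking_rel: "wf ranking_rel"
proof (rule trans_disj_wf_implies_wf)
  show "trans ranking_rel"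
    unfolding ranking_rel_def trans_def using rk_trans by blast
  define T where "T i = (if i < m then {(v :: dvar, w :: dvar). lookup (snd v) i < lookup (snd w) i}
     else {(v, w). fst v = i - m \<and> fst w \<noteq> i - m})" for i
  have "wf (T i)" for i
  proof (cases "i < m")
    case True
    then have "T i = inv_image {(x, y). x < y} (\<lambda>v. lookup (snd v) i)"
      by (auto simp: T_def)
    then show ?thesis
      using wf_inv_image[OF wf_less] by simp
  next
    case False
    then have "T i O T i = {}"
      by (auto simp: T_def)
    then show ?thesis
      using wf_comp_self[of "T i"] by simp
  qed
  moreover have "ranking_rel \<subseteq> (\<Union>i<m + n. T i)"
  proof
    fix x assume "x \<in> ranking_rel"
    then obtain v w where x: "x = (v, w)" and vw: "valid_dvar n m v" "valid_dvar n m w" "rk v w"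
      by (auto simp: ranking_rel_def)
    show "x \<in> (\<Union>i<m + n. T i)"
    proof (cases "fst v = fst w")
      case True
      then obtain k where "k < m" "lookup (snd v) k < lookup (snd w) k"
        using rk_imp_exponent_less[OF vw] by blast
      then show ?thesis
        unfolding x by (intro UN_I[of k]) (auto simp: T_def)
    next
      case False
      moreover have "fst v < n"
        using vw(1) by (simp add: valid_dvar_def)
      ultimately show ?thesis
        unfolding x by (intro UN_I[of "m + fst v"]) (auto simp: T_def)
    qed
  qed
  ultimately show "disj_wf ranking_rel"
    unfolding disj_wf by (intro exI[of _ T] exI[of _ "m + n"] conjI) auto
qed

lemma rk_max_exists:
  assumes "finite S" "S \<noteq> {}" "\<forall>v\<in>S. valid_dvar n m v"
  shows "\<exists>w\<in>S. \<forall>v\<in>S. v \<noteq> w \<longrightarrow> rk v w"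
proof -
  let ?U = "{v. valid_dvar n m v}"
  have "\<forall>x\<in>?U. \<forall>y\<in>?U. \<forall>z\<in>?U. rk y x \<longrightarrow> rk z y \<longrightarrow> rk z x"
    using rk_trans by blast
  moreover have "\<forall>x\<in>?U. \<forall>y\<in>?U. x \<noteq> y \<longrightarrow> rk y x \<or> rk x y"
    using rk_total by blast
  moreover have "S \<subseteq> ?U"
    using assms(3) by blast
  ultimately show ?thesis
    using finite_has_least_wrt[OF assms(1,2), of ?U "\<lambda>x y. rk y x"] by blast
qed

lemma leader_props:
  assumes "f \<in> dpolys n m" "\<not> is_const f"
  shows "leader rk f \<in> dvars f" "\<And>w. w \<in> dvars f \<Longrightarrow> w \<noteq> leader rk f \<Longrightarrow> rk w (leader rk f)"
proof -
  have val: "\<forall>v\<in>dvars f. valid_dvar n m v" using assms(1) by (simp add: dpolys_iff)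
  obtain w where w: "w \<in> dvars f" "\<forall>v\<in>dvars f. v \<noteq> w \<longrightarrow> rk v w"
    using rk_max_exists[of "dvars f"] assms(2) val by (auto simp: is_const_def)
  have ex: "\<exists>!v. v \<in> dvars f \<and> (\<forall>w\<in>dvars f. w \<noteq> v \<longrightarrow> rk w v)"
  proof (rule ex1I[of _ w])
    show "w \<in> dvars f \<and> (\<forall>v\<in>dvars f. v \<noteq> w \<longrightarrow> rk v w)" using w by blast
  next
    fix y assume y: "y \<in> dvars f \<and> (\<forall>w\<in>dvars f. w \<noteq> y \<longrightarrow> rk w y)"
    show "y = w"
    proof (rule ccontr)
      assume "y \<noteq> w"
      then have "rk y w" "rk w y" using w y by auto
      then show False using rk_asym by blast
    qed
  qed
  have L: "leader rk f \<in> dvars f \<and> (\<forall>w\<in>dvars f. w \<noteq> leader rk f \<longrightarrow> rk w (leader rk f))"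
    unfolding leader_def by (rule theI'[OF ex])
  then show "leader rk f \<in> dvars f" by (rule conjunct1)
  fix w assume "w \<in> dvars f" "w \<noteq> leader rk f"
  then show "rk w (leader rk f)" using L by blast
qed

lemma leader_valid: "f \<in> dpolys n m \<Longrightarrow> \<not> is_const f \<Longrightarrow> valid_dvar n m (leader rk f)"
  using leader_props(1) by (auto simp: dpolys_iff)

text \<open>A proper derivative \<theta>f of f has this shape, with w = \<theta>(leader f) and S the separant of f.\<close>

definition linear_leader :: "'a::field dpoly \<Rightarrow> dvar \<Rightarrow> 'a dpoly \<Rightarrow> bool" where
  "linear_leader g w S \<longleftrightarrow> valid_dvar n m w \<and>
     (\<exists>T. g = S * dX w + T \<and> (\<forall>v\<in>dvars T \<union> dvars S. valid_dvar n m v \<and> rk v w))"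

lemma linear_leader_pder_leader:
  assumes "g \<in> dpolys n m" "\<not> is_const g" "j < m"
  shows "linear_leader (pder \<delta> j g) (dvar_shift j (leader rk g)) (pdiff (leader rk g) g)"
proof -
  let ?w = "leader rk g"
  have wv: "?w \<in> dvars g" and below: "\<And>v. v \<in> dvars g \<Longrightarrow> v \<noteq> ?w \<Longrightarrow> rk v ?w"
    using leader_props[OF assms(1,2)] by blast+
  have val: "\<And>v. v \<in> dvars g \<Longrightarrow> valid_dvar n m v"
    using assms(1) by (simp add: dpolys_iff)
  have vw: "valid_dvar n m ?w"
    using val wv .
  have ws: "rk ?w (dvar_shift j ?w)"
    using rk_shift[OF vw assms(3)] .
  obtain T where T: "pder \<delta> j g = pdiff ?w g * dX (dvar_shift j ?w) + T"
    "dvars T \<subseteq> dvars g \<union> dvar_shift j ` (dvars g - {?w})"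
    using pder_decomp[OF wv] .
  have "valid_dvar n m v \<and> rk v (dvar_shift j ?w)" if v: "v \<in> dvars T \<union> dvars (pdiff ?w g)" for v
  proof -
    consider "v \<in> dvars g" | u where "u \<in> dvars g" "u \<noteq> ?w" "v = dvar_shift j u"
      using v T(2) dvars_pdiff by blast
    then show ?thesis
    proof cases
      case 1
      then show ?thesis
        using val below[of v] ws rk_trans by (cases "v = ?w") blast+
    next
      case 2
      then have "rk u ?w"
        using below by blast
      then show ?thesis
        using 2 val vw assms(3) rk_shift_mono valid_shift by blast
    qed
  qed
  then show ?thesis
    unfolding linear_leader_def using T(1) valid_shift[OF vw assms(3)] by blast
qed

lemma linear_leader_pder:
  assumes "linear_leader g w S" "j < m" "is_derivation (\<delta> j)"
  shows "linear_leader (pder \<delta> j g) (dvar_shift j w) S"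
proof -
  obtain T where T: "g = S * dX w + T" "\<forall>v\<in>dvars T \<union> dvars S. valid_dvar n m v \<and> rk v w"
    and vw: "valid_dvar n m w"
    using assms(1) unfolding linear_leader_def by blast
  have ws: "rk w (dvar_shift j w)"
    using rk_shift[OF vw assms(2)] .
  define T' where "T' = pder \<delta> j S * dX w + pder \<delta> j T"
  have eq: "pder \<delta> j g = S * dX (dvar_shift j w) + T'"
    unfolding T'_def T(1) using assms(3) by (simp add: pder_add pder_mult pder_dX algebra_simps)
  have "dvars T' \<subseteq> dvars (pder \<delta> j S) \<union> {w} \<union> dvars (pder \<delta> j T)"
    unfolding T'_def using dvars_add dvars_mult[of "pder \<delta> j S" "dX w"] by fastforce
  also have "\<dots> \<subseteq> dvars S \<union> dvars T \<union> {w} \<union> dvar_shift j ` (dvars S \<union> dvars T)"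
    using dvars_pder[of \<delta> j S] dvars_pder[of \<delta> j T] by blast
  finally have dT': "dvars T' \<union> dvars S \<subseteq> dvars S \<union> dvars T \<union> {w} \<union> dvar_shift j ` (dvars S \<union> dvars T)"
    by blast
  have "valid_dvar n m v \<and> rk v (dvar_shift j w)" if "v \<in> dvars S \<union> dvars T" for v
    using T(2) that ws rk_trans by blast
  moreover have "valid_dvar n m (dvar_shift j v) \<and> rk (dvar_shift j v) (dvar_shift j w)"
    if "v \<in> dvars S \<union> dvars T" for v
    using T(2) that vw assms(2) rk_shift_mono valid_shift by blast
  ultimately have "\<forall>v\<in>dvars T' \<union> dvars S. valid_dvar n m v \<and> rk v (dvar_shift j w)"
    using dT' vw ws by blast
  then show ?thesis
    unfolding linear_leader_def using eq valid_shift[OF vw assms(2)] by blast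
qed

lemma delta_ideal_linear_leader:
  assumes "g \<in> delta_ideal n m \<delta> A" "g \<in> dpolys n m" "\<not> is_const g" "\<forall>j<m. is_derivation (\<delta> j)"
    and "keys e \<subseteq> {..<m}" "e \<noteq> 0"
  shows "\<exists>t\<in>delta_ideal n m \<delta> A. linear_leader t (fst (leader rk g), snd (leader rk g) + e) (pdiff (leader rk g) g)"
  using assms(5,6)
proof (induction e rule: derivative_exponent_induct)
  case (single j)
  have "linear_leader (pder \<delta> j g) (dvar_shift j (leader rk g)) (pdiff (leader rk g) g)"
    by (rule linear_leader_pder_leader[OF assms(2,3) single])
  moreover have "pder \<delta> j g \<in> delta_ideal n m \<delta> A"
    using assms(1) single by (rule delta_ideal.der[rotated])
  ultimately show ?case
    by (auto simp: dvar_shift_def)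
next
  case (step e j)
  then obtain t where t: "t \<in> delta_ideal n m \<delta> A"
    "linear_leader t (fst (leader rk g), snd (leader rk g) + e) (pdiff (leader rk g) g)"
    by blast
  have "pder \<delta> j t \<in> delta_ideal n m \<delta> A"
    using t(1) step(3) by (rule delta_ideal.der[rotated])
  moreover have "linear_leader (pder \<delta> j t) (dvar_shift j (fst (leader rk g), snd (leader rk g) + e)) (pdiff (leader rk g) g)"
    using linear_leader_pder[OF t(2) step(3)] assms(4) step(3) by blast
  ultimately show ?case
    by (auto simp: dvar_shift_derivative)
qed

definition nonconst :: "'a::zero dpoly \<Rightarrow> bool" where
  "nonconst f \<longleftrightarrow> f \<in> dpolys n m \<and> \<not> is_const f"

lemma nonconst_leader: "nonconst f \<Longrightarrow> leader rk f \<in> dvars f"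
  unfolding nonconst_def using leader_props(1) by blast

lemma nonconst_below: "nonconst f \<Longrightarrow> v \<in> dvars f \<Longrightarrow> v = leader rk f \<or> rk v (leader rk f)"
  unfolding nonconst_def using leader_props(2) by blast

lemma nonconst_valid: "nonconst f \<Longrightarrow> valid_dvar n m (leader rk f)"
  unfolding nonconst_def using leader_valid by blast

lemma nonconst_degree_leader: "nonconst f \<Longrightarrow> 1 \<le> degree_in (leader rk f) f"
  using nonconst_leader degree_in_pos by blast

lemma rank_trans: "rank_less rk f g \<Longrightarrow> rank_less rk g h \<Longrightarrow> rank_less rk f h"
  unfolding rank_less_def using rk_trans[of "leader rk f" "leader rk g" "leader rk h"] by auto

lemma rank_trichotomy:
  "nonconst f \<Longrightarrow> nonconst g \<Longrightarrow> rank_less rk f g \<or> same_rank rk f g \<or> rank_less rk g f"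
  unfolding rank_less_def same_rank_def using rk_total[OF nonconst_valid nonconst_valid] by (metis nat_neq_iff)

lemma reduced_not_same_rank: "reduced rk f g \<Longrightarrow> \<not> same_rank rk f g"
  unfolding reduced_def same_rank_def by auto

lemma same_rank_refl: "same_rank rk f f"
  by (simp add: same_rank_def)

lemma reduced_if_rank_less:
  assumes "nonconst f" "nonconst r" "rank_less rk f r"
  shows "reduced rk f r"
proof -
  let ?u = "leader rk f" and ?w = "leader rk r"
  have uw: "?u = ?w \<or> rk ?u ?w"
    using assms(3) unfolding rank_less_def by auto
  have "\<not> proper_derivative v ?w" if v: "v \<in> dvars f" for v
  proof
    assume "proper_derivative v ?w"
    moreover have "valid_dvar n m v"
      using v assms(1) by (auto simp: nonconst_def dpolys_iff)
    ultimately have "rk ?w v"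
      using rk_proper_derivative[OF nonconst_valid[OF assms(2)]] by blast
    moreover have "v = ?u \<or> rk v ?u"
      using nonconst_below[OF assms(1) v] .
    ultimately show False
      using uw rk_trans rk_irrefl by metis
  qed
  moreover have "degree_in ?w f < degree_in ?w r"
  proof (cases "?u = ?w")
    case True
    then show ?thesis
      using assms(3) unfolding rank_less_def by (auto simp: rk_irrefl)
  next
    case False
    have "?w \<notin> dvars f"
    proof
      assume "?w \<in> dvars f"
      then have "?w = ?u \<or> rk ?w ?u"
        using nonconst_below[OF assms(1)] by blast
      then show False
        using uw False rk_asym by auto
    qed
    then show ?thesis
      using nonconst_degree_leader[OF assms(2)] by (simp add: degree_in_notin)
  qed
  ultimately show ?thesis
    by (simp add: reduced_def partially_reduced_def)
qed

lemma autoreduced_sorted: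
  assumes "autoreduced rk A" "\<forall>f\<in>A. nonconst f"
  obtains xs where "set xs = A" "sorted_wrt (rank_less rk) xs"
proof -
  have "\<forall>x\<in>A. \<forall>y\<in>A. x \<noteq> y \<longrightarrow> rank_less rk x y \<or> rank_less rk y x"
    using assms rank_trichotomy reduced_not_same_rank by (metis autoreduced_def)
  moreover have "finite A"
    using assms(1) by (simp add: autoreduced_def)
  ultimately show ?thesis
    using sorted_wrt_list_exists[of A "rank_less rk"] rank_trans that by blast
qed

text \<open>Replacing the part of A of rank at least r by r yields a lower autoreduced set.\<close>

lemma autoreduced_insert_below:
  assumes "autoreduced rk A" "\<forall>f\<in>A. nonconst f" "nonconst r" "\<forall>f\<in>A. reduced rk r f"
    and "C \<subseteq> A" "\<forall>g\<in>C. rank_less rk g r"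
  shows "autoreduced rk (C \<union> {r})"
  unfolding autoreduced_def
proof (intro conjI ballI impI)
  show "finite (C \<union> {r})"
    using assms(1,5) finite_subset by (auto simp: autoreduced_def)
  show "\<not> is_const f" if "f \<in> C \<union> {r}" for f
    using that assms(2,3,5) by (auto simp: nonconst_def)
  show "reduced rk f g" if fg: "f \<in> C \<union> {r}" "g \<in> C \<union> {r}" "f \<noteq> g" for f g
  proof -
    consider "f = r" "g \<in> C" | "f \<in> C" "g = r" | "f \<in> C" "g \<in> C"
      using fg by blast
    then show ?thesis
    proof cases
      case 1
      then show ?thesis
        using assms(4,5) by blast
    next
      case 2
      then show ?thesis
        using reduced_if_rank_less assms(2,3,5,6) by blast
    next
      case 3
      then show ?thesis
        using assms(1,5) fg(3) by (auto simp: autoreduced_def)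
    qed
  qed
qed

lemma aut_lower_insert_below:
  assumes xs: "set xs = A" "sorted_wrt (rank_less rk) xs"
    and "\<forall>f\<in>A. nonconst f" "nonconst r" "\<forall>f\<in>A. reduced rk r f"
  shows "aut_lower rk (set (takeWhile (\<lambda>g. rank_less rk g r) xs) \<union> {r}) A"
proof -
  let ?P = "\<lambda>g. rank_less rk g r"
  define k where "k = length (takeWhile ?P xs)"
  define as where "as = take k xs @ [r]"
  have tw: "take k xs = takeWhile ?P xs"
    unfolding k_def by (metis takeWhile_eq_take)
  have klen: "k \<le> length xs"
    unfolding k_def by (rule length_takeWhile_le)
  have sorted: "sorted_wrt (rank_less rk) as"
    unfolding as_def using xs(2) set_takeWhileD[of _ ?P xs]
    by (auto simp: sorted_wrt_append sorted_wrt_take tw)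
  have prefix: "\<forall>i<k. same_rank rk (as ! i) (xs ! i)"
    unfolding as_def using klen by (simp add: nth_append same_rank_refl)
  have "(\<exists>i<min (length as) (length xs). (\<forall>i'<i. same_rank rk (as ! i') (xs ! i')) \<and> rank_less rk (as ! i) (xs ! i)) \<or>
        (length xs < length as \<and> (\<forall>i<length xs. same_rank rk (as ! i) (xs ! i)))"
  proof (cases "k < length xs")
    case True
    have "\<not> rank_less rk (xs ! k) r"
      unfolding k_def using True k_def nth_length_takeWhile by blast
    moreover have "xs ! k \<in> A"
      using True xs(1) by auto
    ultimately have "rank_less rk r (xs ! k)"
      using rank_trichotomy assms(3-5) reduced_not_same_rank by blast
    moreover have "as ! k = r" "k < min (length as) (length xs)"
      unfolding as_def using klen True by (auto simp: nth_append)
    ultimately show ?thesis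
      using prefix by (intro disjI1 exI[of _ k]) auto
  next
    case False
    then show ?thesis
      using prefix klen by (intro disjI2) (auto simp: as_def)
  qed
  moreover have "set as = set (takeWhile ?P xs) \<union> {r}"
    by (simp add: as_def tw)
  ultimately show ?thesis
    unfolding aut_lower_def using sorted xs by blast
qed

lemma characteristic_set_no_reduced:
  assumes "characteristic_set rk A P" "P \<subseteq> dpolys n m"
    and "r \<in> P" "nonconst r" "\<forall>f\<in>A. reduced rk r f"
  shows False
proof -
  have A: "autoreduced rk A" "A \<subseteq> P" and min: "\<not> (\<exists>B. autoreduced rk B \<and> B \<subseteq> P \<and> aut_lower rk B A)"
    using assms(1) unfolding characteristic_set_def by auto
  have nc: "\<forall>f\<in>A. nonconst f"
    using A assms(2) unfolding autoreduced_def nonconst_def by blast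
  obtain xs where xs: "set xs = A" "sorted_wrt (rank_less rk) xs"
    using autoreduced_sorted[OF A(1) nc] .
  let ?C = "set (takeWhile (\<lambda>g. rank_less rk g r) xs)"
  have "?C \<subseteq> A" "\<forall>g\<in>?C. rank_less rk g r"
    using xs(1) set_takeWhileD by fastforce+
  then have "autoreduced rk (?C \<union> {r})"
    using autoreduced_insert_below[OF A(1) nc assms(4,5)] by blast
  moreover have "?C \<union> {r} \<subseteq> P"
    using \<open>?C \<subseteq> A\<close> A(2) assms(3) by blast
  ultimately show False
    using min aut_lower_insert_below[OF xs nc assms(4,5)] by blast
qed

end

section \<open>Ritt's reduction\<close>

locale char_set_of_prime = ranking n m rk for n m :: nat and rk :: "dvar \<Rightarrow> dvar \<Rightarrow> bool" +
  fixes \<delta> :: "nat \<Rightarrow> 'a::field_char_0 \<Rightarrow> 'a" and D :: "'a \<Rightarrow> 'a" and P \<Lambda> :: "'a dpoly set"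
  assumes commuting: "commuting_derivations m \<delta> D"
    and prime: "prime_delta_ideal n m \<delta> P"
    and char_set: "characteristic_set rk \<Lambda> P"
begin

abbreviation H :: "'a dpoly" where
  "H \<equiv> H_of rk \<Lambda>"

lemma derivations: "\<forall>j<m. is_derivation (\<delta> j)"
  using commuting by (simp add: commuting_derivations_def)

lemma derivations_commute: "\<forall>j<m. \<forall>k<m. \<delta> j \<circ> \<delta> k = \<delta> k \<circ> \<delta> j"
  using commuting by (simp add: commuting_derivations_def)

lemma prime_subset_dpolys: "P \<subseteq> dpolys n m"
  using prime by (simp add: prime_delta_ideal_def)

lemma char_set_subset: "\<Lambda> \<subseteq> P"
  using char_set by (simp add: characteristic_set_def)

lemma char_set_autoreduced: "autoreduced rk \<Lambda>"
  using char_set by (simp add: characteristic_set_def)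

lemma finite_char_set: "finite \<Lambda>"
  using char_set_autoreduced by (simp add: autoreduced_def)

lemma char_set_dpolys: "\<Lambda> \<subseteq> dpolys n m"
  using char_set_subset prime_subset_dpolys by blast

lemma char_set_nonconst: "f \<in> \<Lambda> \<Longrightarrow> nonconst f"
  using char_set_dpolys char_set_autoreduced by (auto simp: autoreduced_def nonconst_def)

lemma char_set_reduced: "f \<in> \<Lambda> \<Longrightarrow> g \<in> \<Lambda> \<Longrightarrow> f \<noteq> g \<Longrightarrow> reduced rk f g"
  using char_set_autoreduced by (simp add: autoreduced_def)

lemma delta_ideal_subset_prime: "h \<in> delta_ideal n m \<delta> \<Lambda> \<Longrightarrow> h \<in> P"
  using delta_ideal_minimal[OF prime char_set_subset] .

lemma char_set_leaders_inj: "f \<in> \<Lambda> \<Longrightarrow> g \<in> \<Lambda> \<Longrightarrow> leader rk f = leader rk g \<Longrightarrow> f = g"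
  using char_set_reduced[of f g] char_set_reduced[of g f] by (auto simp: reduced_def less_not_sym)

lemma char_set_leader_not_proper_derivative:
  assumes "f \<in> \<Lambda>" "g \<in> \<Lambda>"
  shows "\<not> proper_derivative (leader rk f) (leader rk g)"
proof (cases "f = g")
  case False
  then have "partially_reduced rk f g"
    using char_set_reduced assms by (simp add: reduced_def)
  then show ?thesis
    using nonconst_leader[OF char_set_nonconst[OF assms(1)]] by (auto simp: partially_reduced_def)
qed (simp add: proper_derivative_def)

lemma initial_dpolys: "f \<in> \<Lambda> \<Longrightarrow> initial rk f \<in> dpolys n m"
  using dpolys_subset dvars_initial char_set_dpolys by blast

lemma separant_dpolys: "f \<in> \<Lambda> \<Longrightarrow> separant rk f \<in> dpolys n m"
  using dpolys_subset dvars_separant char_set_dpolys by blast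

lemma H_dpolys: "H \<in> dpolys n m"
  unfolding H_of_def using initial_dpolys separant_dpolys by (intro dpolys_prod dpolys_mult)

lemma H_factor: "f \<in> \<Lambda> \<Longrightarrow> \<exists>J\<in>dpolys n m. H = initial rk f * separant rk f * J"
  unfolding H_of_def using finite_char_set initial_dpolys separant_dpolys
  by (intro bexI[of _ "\<Prod>g\<in>\<Lambda> - {f}. initial rk g * separant rk g"] dpolys_prod dpolys_mult)
    (auto simp: prod.remove)

definition unreduced_at :: "'a dpoly \<Rightarrow> dvar \<Rightarrow> bool" where
  "unreduced_at g v \<longleftrightarrow> v \<in> dvars g \<and> (\<exists>f\<in>\<Lambda>. proper_derivative v (leader rk f) \<or>
      (v = leader rk f \<and> degree_in v f \<le> degree_in v g))"

lemma unreduced_at_valid: "g \<in> P \<Longrightarrow> unreduced_at g v \<Longrightarrow> valid_dvar n m v"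
  using prime_subset_dpolys by (auto simp: unreduced_at_def dpolys_iff)

lemma unreduced_at_transfer:
  "unreduced_at r v \<Longrightarrow> v \<in> dvars g \<Longrightarrow> degree_in v r \<le> degree_in v g \<Longrightarrow> unreduced_at g v"
  unfolding unreduced_at_def by (meson le_trans)

lemma unreduced_at_max:
  assumes "g \<in> P" "unreduced_at g v"
  obtains w where "valid_dvar n m w" "unreduced_at g w" "\<forall>v. unreduced_at g v \<longrightarrow> v = w \<or> rk v w"
proof -
  have "finite {v. unreduced_at g v}"
    by (rule finite_subset[of _ "dvars g"]) (auto simp: unreduced_at_def)
  then obtain w where "w \<in> {v. unreduced_at g v}" "\<forall>v\<in>{v. unreduced_at g v}. v \<noteq> w \<longrightarrow> rk v w"
    using rk_max_exists[of "{v. unreduced_at g v}"] assms unreduced_at_valid by blast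
  then show ?thesis
    using that unreduced_at_valid[OF assms(1)] by blast
qed

lemma reduced_in_prime_eq_zero:
  assumes "g \<in> P" "\<And>v. \<not> unreduced_at g v"
  shows "g = 0"
proof (cases "is_const g")
  case True
  then have "g = single 0 (lookup g 0)"
    using dvars_empty_const by (simp add: is_const_def)
  then show ?thesis
    using prime_delta_ideal_const_zero[OF prime] assms(1) by (metis single_zero)
next
  case False
  have "reduced rk g f" if f: "f \<in> \<Lambda>" for f
  proof -
    have "partially_reduced rk g f"
      unfolding partially_reduced_def using assms(2) f by (auto simp: unreduced_at_def)
    moreover have "degree_in (leader rk f) g < degree_in (leader rk f) f"
    proof (cases "leader rk f \<in> dvars g")
      case True
      then show ?thesis
        using assms(2)[of "leader rk f"] f by (auto simp: unreduced_at_def)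
    next
      case False
      then show ?thesis
        using nonconst_degree_leader[OF char_set_nonconst[OF f]] by (simp add: degree_in_notin)
    qed
    ultimately show ?thesis
      by (simp add: reduced_def)
  qed
  moreover have "nonconst g"
    using assms(1) prime_subset_dpolys False by (auto simp: nonconst_def)
  ultimately show ?thesis
    using characteristic_set_no_reduced[OF char_set prime_subset_dpolys assms(1)] by blast
qed

lemma not_unreduced_at_if_below:
  assumes f: "f \<in> \<Lambda>" and h: "dvars h \<subseteq> dvars f" "\<And>v. degree_in v h \<le> degree_in v f"
    "degree_in (leader rk f) h < degree_in (leader rk f) f"
  shows "\<not> unreduced_at h v"
proof
  assume "unreduced_at h v"
  then obtain f' where v: "v \<in> dvars h" "f' \<in> \<Lambda>"
    "proper_derivative v (leader rk f') \<or> (v = leader rk f' \<and> degree_in v f' \<le> degree_in v h)"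
    by (auto simp: unreduced_at_def)
  have vf: "v \<in> dvars f"
    using v(1) h(1) by blast
  then have "valid_dvar n m v"
    using char_set_dpolys f by (auto simp: dpolys_iff)
  show False
  proof (cases "f' = f")
    case True
    have "\<not> proper_derivative v (leader rk f)"
      using rk_proper_derivative[OF nonconst_valid[OF char_set_nonconst[OF f]] \<open>valid_dvar n m v\<close>]
        nonconst_below[OF char_set_nonconst[OF f] vf] rk_irrefl rk_trans by blast
    then show False
      using v(3) h(3) True by auto
  next
    case False
    then have "reduced rk f f'"
      using char_set_reduced f v(2) by blast
    then show False
      using v(3) vf h(2)[of v] by (auto simp: reduced_def partially_reduced_def)
  qed
qed

lemma initial_separant_notin_prime:
  assumes f: "f \<in> \<Lambda>"
  shows "initial rk f \<notin> P" "separant rk f \<notin> P"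
proof -
  have nc: "nonconst f"
    using char_set_nonconst[OF f] .
  then have "f \<noteq> 0"
    by (auto simp: nonconst_def is_const_def)
  then have "initial rk f \<noteq> 0"
    unfolding initial_def by (rule coeff_in_nonzero)
  moreover have "leader rk f \<notin> dvars (initial rk f)"
    using dvars_initial by blast
  then have "degree_in (leader rk f) (initial rk f) < degree_in (leader rk f) f"
    using nonconst_degree_leader[OF nc] by (simp add: degree_in_notin)
  then have "\<not> unreduced_at (initial rk f) v" for v
    using not_unreduced_at_if_below[OF f] dvars_initial degree_initial_le by blast
  ultimately show "initial rk f \<notin> P"
    using reduced_in_prime_eq_zero by blast
  have "separant rk f \<noteq> 0"
    unfolding separant_def by (rule pdiff_nonzero) (rule nonconst_leader[OF nc])
  moreover have "degree_in (leader rk f) (separant rk f) < degree_in (leader rk f) f"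
    using degree_separant_leader[of rk f] nonconst_degree_leader[OF nc] by linarith
  then have "\<not> unreduced_at (separant rk f) v" for v
    using not_unreduced_at_if_below[OF f] dvars_separant degree_separant_le by blast
  ultimately show "separant rk f \<notin> P"
    using reduced_in_prime_eq_zero by blast
qed

lemma H_notin_prime: "H \<notin> P"
  unfolding H_of_def
proof (rule prime_delta_ideal_prod_notin[OF prime finite_char_set])
  fix f assume "f \<in> \<Lambda>"
  then show "initial rk f * separant rk f \<in> dpolys n m" "initial rk f * separant rk f \<notin> P"
    using initial_separant_notin_prime initial_dpolys separant_dpolys
      prime_delta_ideal_mult_notin[OF prime] dpolys_mult by blast+
qed

lemma pseudo_reduction:
  assumes t: "t \<in> delta_ideal n m \<delta> \<Lambda>" "t = I * dX w ^ d + t0"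
    and "w \<notin> dvars I" "degree_bounded w (d - 1) t0" "1 \<le> d"
    and valid: "I \<in> dpolys n m" "t0 \<in> dpolys n m" "valid_dvar n m w" and g: "g \<in> P"
  obtains k q r where "I ^ k * g = q * t + r" "q \<in> dpolys n m" "r \<in> P" "degree_bounded w (d - 1) r"
    "dvars r \<subseteq> dvars g \<union> dvars I \<union> dvars t0 \<union> {w}"
    "\<And>v. v \<notin> dvars I \<union> dvars t0 \<union> {w} \<Longrightarrow> degree_in v r \<le> degree_in v g"
proof -
  obtain k q r where kqr: "I ^ k * g = q * t + r" "degree_bounded w (d - 1) r"
    "dvars q \<union> dvars r \<subseteq> dvars g \<union> dvars I \<union> dvars t0 \<union> {w}"
    "\<forall>v. v \<notin> dvars I \<union> dvars t0 \<union> {w} \<longrightarrow> degree_in v r \<le> degree_in v g"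
    using pseudo_division[OF t(2) assms(3-5)] by blast
  have "g \<in> dpolys n m"
    using g prime_subset_dpolys by blast
  then have "q \<in> dpolys n m"
    using kqr(3) valid unfolding dpolys_iff by blast
  moreover have "r \<in> P"
  proof -
    have "I ^ k * g \<in> P" "q * t \<in> P"
      using prime_delta_ideal_mult[OF prime] dpolys_power[OF valid(1)] g
        \<open>q \<in> dpolys n m\<close> delta_ideal_subset_prime[OF t(1)] by blast+
    then have "I ^ k * g - q * t \<in> P"
      by (rule prime_delta_ideal_diff[OF prime])
    then show ?thesis
      using kqr(1) by (simp add: algebra_simps)
  qed
  ultimately show ?thesis
    using that kqr by blast
qed

lemma saturation_of_remainder:
  assumes "I ^ k * g = q * t + r" "q \<in> dpolys n m" "t \<in> delta_ideal n m \<delta> \<Lambda>"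
    and "J \<in> dpolys n m" "H = I * J" "H ^ l * r \<in> delta_ideal n m \<delta> \<Lambda>"
  shows "H ^ (l + k) * g \<in> delta_ideal n m \<delta> \<Lambda>"
proof -
  have "(H ^ l * q) * t \<in> delta_ideal n m \<delta> \<Lambda>"
    using assms(3) by (rule delta_ideal.mult[rotated]) (intro dpolys_mult dpolys_power H_dpolys assms(2))
  then have "(H ^ l * q) * t + H ^ l * r \<in> delta_ideal n m \<delta> \<Lambda>"
    using assms(6) by (rule delta_ideal.add)
  moreover have "(H ^ l * q) * t + H ^ l * r = H ^ l * (I ^ k * g)"
    using assms(1) by (simp add: algebra_simps)
  ultimately have "H ^ l * (I ^ k * g) \<in> delta_ideal n m \<delta> \<Lambda>"
    by simp
  then have "J ^ k * (H ^ l * (I ^ k * g)) \<in> delta_ideal n m \<delta> \<Lambda>"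
    by (rule delta_ideal.mult[OF dpolys_power[OF assms(4)]])
  moreover have "J ^ k * (H ^ l * (I ^ k * g)) = H ^ (l + k) * g"
    using assms(5) by (simp add: power_add power_mult_distrib algebra_simps)
  ultimately show ?thesis
    by simp
qed

text \<open>The divisor is the derivative of f with leader w, linear in w with the separant of f as
  coefficient.\<close>

lemma reduce_at_proper_derivative:
  assumes "valid_dvar n m w" "g \<in> P" "\<forall>v. unreduced_at g v \<longrightarrow> v = w \<or> rk v w"
    and f: "f \<in> \<Lambda>" "proper_derivative w (leader rk f)"
  obtains k q t r where "separant rk f ^ k * g = q * t + r" "q \<in> dpolys n m"
    "t \<in> delta_ideal n m \<delta> \<Lambda>" "r \<in> P" "\<forall>v. unreduced_at r v \<longrightarrow> rk v w"
proof -
  let ?S = "separant rk f"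
  obtain e where e: "e \<noteq> 0" "keys e \<subseteq> keys (snd w)" "w = (fst (leader rk f), snd (leader rk f) + e)"
    using proper_derivative_decomp[OF f(2)] .
  have "keys e \<subseteq> {..<m}"
    using e(2) assms(1) by (auto simp: valid_dvar_def)
  then obtain t where t: "t \<in> delta_ideal n m \<delta> \<Lambda>" "linear_leader t w ?S"
    using delta_ideal_linear_leader[OF delta_ideal.gen[OF f(1)] _ _ derivations _ e(1)]
      char_set_nonconst[OF f(1)] e(3) by (auto simp: nonconst_def separant_def)
  then obtain T where T: "t = ?S * dX w + T" "\<forall>v\<in>dvars T \<union> dvars ?S. valid_dvar n m v \<and> rk v w"
    unfolding linear_leader_def by blast
  have wST: "w \<notin> dvars ?S" "w \<notin> dvars T"
    using T(2) rk_irrefl by blast+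
  have tS: "t = ?S * dX w ^ 1 + T" "degree_bounded w (1 - 1) T" "T \<in> dpolys n m"
    using T degree_bounded_notin[OF wST(2)] by (auto simp: dpolys_iff)
  obtain k q r where kqr: "?S ^ k * g = q * t + r" "q \<in> dpolys n m" "r \<in> P"
    "degree_bounded w (1 - 1) r" "dvars r \<subseteq> dvars g \<union> dvars ?S \<union> dvars T \<union> {w}"
    "\<And>v. v \<notin> dvars ?S \<union> dvars T \<union> {w} \<Longrightarrow> degree_in v r \<le> degree_in v g"
    using pseudo_reduction[OF t(1) tS(1) wST(1) tS(2) order_refl separant_dpolys[OF f(1)] tS(3) assms(1,2)]
    by blast
  have "w \<notin> dvars r"
    using degree_bounded_0_notin[of w r] kqr(4) by simp
  have "rk v w" if unr: "unreduced_at r v" for v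
  proof -
    have "v \<in> dvars r" "v \<noteq> w"
      using unr \<open>w \<notin> dvars r\<close> by (auto simp: unreduced_at_def)
    then consider "v \<in> dvars ?S \<union> dvars T" | "v \<in> dvars g" "v \<notin> dvars ?S \<union> dvars T \<union> {w}"
      using kqr(5) by blast
    then show ?thesis
    proof cases
      case 2
      then show ?thesis
        using unreduced_at_transfer[OF unr] kqr(6) assms(3) by blast
    qed (use T(2) in blast)
  qed
  then show ?thesis
    using that kqr t(1) by blast
qed

lemma reduce_at_leader:
  assumes "g \<in> P" "\<forall>v. unreduced_at g v \<longrightarrow> v = w \<or> rk v w"
    and f: "f \<in> \<Lambda>" "w = leader rk f" "degree_in w f \<le> degree_in w g"
  obtains k q r where "initial rk f ^ k * g = q * f + r" "q \<in> dpolys n m"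
    "r \<in> P" "\<forall>v. unreduced_at r v \<longrightarrow> rk v w"
proof -
  let ?d = "degree_in w f" and ?I = "initial rk f"
  have nc: "nonconst f"
    using char_set_nonconst[OF f(1)] .
  have d: "1 \<le> ?d"
    using nonconst_degree_leader[OF nc] f(2) by simp
  obtain f0 where f0: "f = ?I * dX w ^ ?d + f0" "degree_bounded w (?d - 1) f0" "keys f0 \<subseteq> keys f"
    using coeff_in_decomp[OF degree_bounded_degree_in[of w f]] f(2) by (auto simp: initial_def)
  have df: "dvars ?I \<subseteq> dvars f - {w}" "dvars f0 \<subseteq> dvars f"
    using dvars_initial[of rk f] f(2) f0(3) unfolding dvars_def by auto
  have valid: "f0 \<in> dpolys n m" "valid_dvar n m w"
    using dpolys_subset[OF df(2)] char_set_dpolys f nonconst_valid[OF nc] by auto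
  obtain k q r where kqr: "?I ^ k * g = q * f + r" "q \<in> dpolys n m" "r \<in> P" "degree_bounded w (?d - 1) r"
    "dvars r \<subseteq> dvars g \<union> dvars ?I \<union> dvars f0 \<union> {w}"
    "\<And>v. v \<notin> dvars ?I \<union> dvars f0 \<union> {w} \<Longrightarrow> degree_in v r \<le> degree_in v g"
    using pseudo_reduction[OF delta_ideal.gen[OF f(1)] f0(1) _ f0(2) d initial_dpolys[OF f(1)] valid assms(1)] df
    by blast
  have "rk v w" if unr: "unreduced_at r v" for v
  proof (cases "v = w")
    case True
    then obtain f' where f': "f' \<in> \<Lambda>"
      "proper_derivative w (leader rk f') \<or> (w = leader rk f' \<and> degree_in w f' \<le> degree_in w r)"
      using unr by (auto simp: unreduced_at_def)
    then have "w = leader rk f'" "degree_in w f' \<le> degree_in w r"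
      using char_set_leader_not_proper_derivative[OF f(1) f'(1)] f(2) by auto
    then have "f' = f"
      using char_set_leaders_inj f f'(1) by metis
    moreover have "degree_in w r \<le> ?d - 1"
      using kqr(4) degree_in_le by blast
    ultimately show ?thesis
      using \<open>degree_in w f' \<le> degree_in w r\<close> d by simp
  next
    case False
    then consider "v \<in> dvars f" | "v \<in> dvars g" "v \<notin> dvars ?I \<union> dvars f0 \<union> {w}"
      using unr kqr(5) df by (auto simp: unreduced_at_def)
    then show ?thesis
    proof cases
      case 1
      then show ?thesis
        using nonconst_below[OF nc] f(2) False by blast
    next
      case 2
      then show ?thesis
        using unreduced_at_transfer[OF unr] kqr(6) assms(2) False by blast
    qed
  qed
  then show ?thesis
    using that kqr by blast
qed

lemma reduction_step:
  assumes "valid_dvar n m w" "g \<in> P" "\<forall>v. unreduced_at g v \<longrightarrow> v = w \<or> rk v w" "unreduced_at g w"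
  obtains I J k q t r where "I ^ k * g = q * t + r" "q \<in> dpolys n m" "t \<in> delta_ideal n m \<delta> \<Lambda>"
    "r \<in> P" "\<forall>v. unreduced_at r v \<longrightarrow> rk v w" "J \<in> dpolys n m" "H = I * J"
proof -
  obtain f where f: "f \<in> \<Lambda>"
    and "proper_derivative w (leader rk f) \<or> (w = leader rk f \<and> degree_in w f \<le> degree_in w g)"
    using assms(4) by (auto simp: unreduced_at_def)
  moreover obtain J where J: "J \<in> dpolys n m" "H = initial rk f * separant rk f * J"
    using H_factor[OF f] by blast
  ultimately show thesis
  proof (elim disjE conjE)
    assume "proper_derivative w (leader rk f)"
    then obtain k q t r where red: "separant rk f ^ k * g = q * t + r" "q \<in> dpolys n m"
      "t \<in> delta_ideal n m \<delta> \<Lambda>" "r \<in> P" "\<forall>v. unreduced_at r v \<longrightarrow> rk v w"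
      using reduce_at_proper_derivative[OF assms(1-3) f] by blast
    show thesis
      by (rule that[OF red dpolys_mult[OF initial_dpolys[OF f] J(1)]]) (simp add: J(2) mult_ac)
  next
    assume "w = leader rk f" "degree_in w f \<le> degree_in w g"
    then obtain k q r where red: "initial rk f ^ k * g = q * f + r" "q \<in> dpolys n m"
      "r \<in> P" "\<forall>v. unreduced_at r v \<longrightarrow> rk v w"
      using reduce_at_leader[OF assms(2,3) f] by blast
    show thesis
      by (rule that[OF red(1,2) delta_ideal.gen[OF f] red(3,4) dpolys_mult[OF separant_dpolys[OF f] J(1)]])
        (simp add: J(2) mult_ac)
  qed
qed

text \<open>Well-founded induction on the highest indeterminate at which g is still unreduced; each
  reduction step pushes it strictly down the ranking.\<close>

lemma saturation_below:
  "valid_dvar n m w \<Longrightarrow> g \<in> P \<Longrightarrow> \<forall>v. unreduced_at g v \<longrightarrow> v = w \<or> rk v w \<Longrightarrow>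
    \<exists>l. H ^ l * g \<in> delta_ideal n m \<delta> \<Lambda>"
proof (induction w arbitrary: g rule: wf_induct[OF wf_ranking_rel])
  case (1 w)
  have strictly_below: "\<exists>l. H ^ l * h \<in> delta_ideal n m \<delta> \<Lambda>"
    if h: "h \<in> P" "\<forall>v. unreduced_at h v \<longrightarrow> rk v w" for h
  proof (cases "\<exists>v. unreduced_at h v")
    case False
    then show ?thesis
      using reduced_in_prime_eq_zero[OF h(1)] delta_ideal.zero by fastforce
  next
    case True
    then obtain w' where "valid_dvar n m w'" "unreduced_at h w'" "\<forall>v. unreduced_at h v \<longrightarrow> v = w' \<or> rk v w'"
      using unreduced_at_max[OF h(1)] by blast
    moreover have "(w', w) \<in> ranking_rel"
      using calculation h(2) "1.prems"(1) unfolding ranking_rel_def by blast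
    ultimately show ?thesis
      using "1.IH" h(1) by blast
  qed
  show ?case
  proof (cases "unreduced_at g w")
    case False
    then show ?thesis
      using strictly_below "1.prems"(2,3) by blast
  next
    case True
    obtain I J k q t r where step: "I ^ k * g = q * t + r" "q \<in> dpolys n m"
      "t \<in> delta_ideal n m \<delta> \<Lambda>" "r \<in> P" "\<forall>v. unreduced_at r v \<longrightarrow> rk v w"
      "J \<in> dpolys n m" "H = I * J"
      by (rule reduction_step[OF "1.prems" True])
    obtain l where "H ^ l * r \<in> delta_ideal n m \<delta> \<Lambda>"
      using strictly_below step(4,5) by blast
    then show ?thesis
      using saturation_of_remainder[OF step(1-3,6,7)] by blast
  qed
qed

theorem prime_subset_saturation: "g \<in> P \<Longrightarrow> \<exists>l. H ^ l * g \<in> delta_ideal n m \<delta> \<Lambda>"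
proof (cases "\<exists>v. unreduced_at g v")
  case False
  assume "g \<in> P"
  then show ?thesis
    using reduced_in_prime_eq_zero False delta_ideal.zero by fastforce
next
  case True
  assume g: "g \<in> P"
  then show ?thesis
    using unreduced_at_max[OF g] True saturation_below by metis
qed

section \<open>The prolongation over a generic point\<close>

lemma zero_set_saturation:
  assumes "a \<in> zero_set n m \<delta> \<Lambda> - zero_set n m \<delta> {H}"
  shows "a \<in> zero_set n m \<delta> (saturation n m \<delta> \<Lambda> H)"
proof -
  have a: "a \<in> points n" "\<forall>f\<in>\<Lambda>. deval m \<delta> f a = 0" "deval m \<delta> H a \<noteq> 0"
    using assms by (auto simp: zero_set_def)
  have "deval m \<delta> f a = 0" if f: "f \<in> saturation n m \<delta> \<Lambda> H" for f
  proof -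
    obtain l where "H ^ l * f \<in> delta_ideal n m \<delta> \<Lambda>"
      using f by (auto simp: saturation_def)
    then have "deval m \<delta> (H ^ l * f) a = 0"
      by (rule delta_ideal_vanish[OF derivations derivations_commute a(2)])
    then show ?thesis
      using a(3) by (simp add: deval_mult deval_power)
  qed
  then show ?thesis
    using a(1) by (simp add: zero_set_def)
qed

lemma char_set_subset_vanishing_ideal:
  "\<Lambda> \<subseteq> vanishing_ideal n m \<delta> (zero_set n m \<delta> (saturation n m \<delta> \<Lambda> H))"
proof -
  have "\<Lambda> \<subseteq> saturation n m \<delta> \<Lambda> H"
    unfolding saturation_def using char_set_dpolys delta_ideal.gen[of _ \<Lambda> n m \<delta>]
    by (auto intro!: exI[of _ 0])
  then show ?thesis
    using char_set_dpolys by (auto simp: vanishing_ideal_def zero_set_def)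
qed

lemma vanishing_ideal_subset_prime:
  assumes "DCF m \<delta>" "g \<in> vanishing_ideal n m \<delta> (zero_set n m \<delta> (saturation n m \<delta> \<Lambda> H))"
  shows "g \<in> P"
proof -
  have g: "g \<in> dpolys n m" "\<forall>a\<in>zero_set n m \<delta> (saturation n m \<delta> \<Lambda> H). deval m \<delta> g a = 0"
    using assms(2) by (auto simp: vanishing_ideal_def)
  have Hg: "H * g \<in> dpolys n m"
    using dpolys_mult[OF H_dpolys g(1)] .
  have "\<exists>k. (H * g) ^ k \<in> delta_ideal n m \<delta> \<Lambda>"
  proof (rule ccontr)
    assume "\<not> ?thesis"
    then obtain a where a: "a \<in> points n" "\<forall>f\<in>\<Lambda>. deval m \<delta> f a = 0" "deval m \<delta> (H * g) a \<noteq> 0"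
      using assms(1) finite_char_set char_set_dpolys Hg unfolding DCF_def by blast
    then have "a \<in> zero_set n m \<delta> \<Lambda> - zero_set n m \<delta> {H}"
      by (auto simp: zero_set_def deval_mult)
    then show False
      using zero_set_saturation g(2) a(3) by (auto simp: deval_mult)
  qed
  then have "H * g \<in> P"
    using delta_ideal_subset_prime prime_delta_ideal_power[OF prime Hg] by blast
  then show ?thesis
    using prime_delta_ideal_prop[OF prime] H_dpolys g(1) H_notin_prime by blast
qed

lemma prolongation_iff_tau_zero_set:
  assumes "DCF m \<delta>" "a \<in> zero_set n m \<delta> \<Lambda> - zero_set n m \<delta> {H}" "b \<in> points n"
  shows "(a, b) \<in> prolongation n m \<delta> D (zero_set n m \<delta> (saturation n m \<delta> \<Lambda> H))
          \<longleftrightarrow> (a, b) \<in> tau_zero_set n m \<delta> D \<Lambda>"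
proof
  assume "(a, b) \<in> prolongation n m \<delta> D (zero_set n m \<delta> (saturation n m \<delta> \<Lambda> H))"
  then show "(a, b) \<in> tau_zero_set n m \<delta> D \<Lambda>"
    using char_set_subset_vanishing_ideal by (auto simp: prolongation_def tau_zero_set_def)
next
  assume ab: "(a, b) \<in> tau_zero_set n m \<delta> D \<Lambda>"
  have "deval m \<delta> g a = 0 \<and> tau_eval m \<delta> D g a b = 0"
    if g: "g \<in> vanishing_ideal n m \<delta> (zero_set n m \<delta> (saturation n m \<delta> \<Lambda> H))" for g
  proof -
    have ga: "deval m \<delta> g a = 0"
      using g zero_set_saturation[OF assms(2)] by (auto simp: vanishing_ideal_def)
    obtain l where l: "H ^ l * g \<in> delta_ideal n m \<delta> \<Lambda>"
      using prime_subset_saturation vanishing_ideal_subset_prime[OF assms(1) g] by blast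
    have "tau_eval m \<delta> D (H ^ l * g) a b = 0"
      using delta_ideal_tau_vanish[OF commuting _ l] ab by (auto simp: tau_zero_set_def)
    then have "deval m \<delta> H a ^ l * tau_eval m \<delta> D g a b = 0"
      using ga commuting by (simp add: tau_eval_mult deval_power commuting_derivations_def)
    then show ?thesis
      using ga assms(2) by (simp add: zero_set_def)
  qed
  then show "(a, b) \<in> prolongation n m \<delta> D (zero_set n m \<delta> (saturation n m \<delta> \<Lambda> H))"
    using ab assms(3) by (auto simp: prolongation_def tau_zero_set_def)
qed

end

theorem mainTheorem2:
  fixes m n :: nat
    and \<delta> :: "nat \<Rightarrow> 'a::field_char_0 \<Rightarrow> 'a"
    and D :: "'a \<Rightarrow> 'a"
    and rk :: "dvar \<Rightarrow> dvar \<Rightarrow> bool"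
    and P \<Lambda> :: "'a dpoly set"
    and a :: "nat \<Rightarrow> 'a"
  assumes "commuting_derivations m \<delta> D"
    and "DCF m \<delta>"
    and "is_ranking n m rk"
    and "prime_delta_ideal n m \<delta> P"
    and "characteristic_set rk \<Lambda> P"
    and "a \<in> zero_set n m \<delta> \<Lambda> - zero_set n m \<delta> {H_of rk \<Lambda>}"
  shows "a \<in> zero_set n m \<delta> (saturation n m \<delta> \<Lambda> (H_of rk \<Lambda>)) \<and>
         (\<forall>b\<in>points n.
            (a, b) \<in> prolongation n m \<delta> D (zero_set n m \<delta> (saturation n m \<delta> \<Lambda> (H_of rk \<Lambda>)))
            \<longleftrightarrow> (a, b) \<in> tau_zero_set n m \<delta> D \<Lambda>)"
proof -
  interpret char_set_of_prime n m rk \<delta> D P \<Lambda>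
    by unfold_locales (fact assms)+
  show ?thesis
    using zero_set_saturation[OF assms(6)] prolongation_iff_tau_zero_set[OF assms(2,6)] by blast
qed

end
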